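(* Let $Q=\langle x_1,\ldots,x_n\mid r_1,\ldots,r_m\rangle$ be a finitely presented connected quandle, $X$ a quandle, $A$ an abelian group and $\theta:X^2\to A$ a quandle $2$-cocycle. For any quandle homomorphism $\rho:Q\to X$, \[ E_0\bigl(A(Q,\rho;f_{\theta},0)\bigr)=\bigl(\{1\cdot a-1\cdot 0_A\mid a\in{\rm Im}(\theta\circ\rho_{\ast})\}\bigr) \] as ideals of $\mathbb{Z}[A]$, where $\rho_{\ast}:H^Q_2(Q)\to H^Q_2(X)$ is the homomorphism induced by $\rho$ and $\theta:H^Q_2(X)\to A$ is the homomorphism induced by $\theta$.
   Context: A quandle is a set $X$ with operation $(x,y)\mapsto x^y$ such that $x^x=x$, $z\mapsto z^y$ is bijective (inverse $x\mapsto x^{y^{-1}}$), and $(x^y)^z=(x^z)^{(y^z)}$; write $x^{yz}=(x^y)^z$. $Q$ is connected if for all $x,y\in Q$ there are $z_1,\dots,z_k\in Q$, $\varepsilon_i\in\{\pm1\}$ with $x^{z_1^{\varepsilon_1}\cdots z_k^{\varepsilon_k}}=y$. A presentation $\langle S\mid R\rangle$ is the quotient of the free quandle $FQ(S)$ by the smallest congruence containing $R\subset FQ(S)^2$. A quandle $2$-cocycle is $\theta:X^2\to A$ with $\theta(x,x)=0_A$ and $\theta(x,y)+\theta(x^y,z)=\theta(x,z)+\theta(x^z,y^z)$. Quandle homology: $C^R_n(X)$ is the free abelian group on $X^n$ ($0$ for $n\le0$), with $\partial(x_1,\dots,x_n)=\sum_{i=2}^n(-1)^i\bigl[(x_1,\dots,\widehat{x_i},\dots,x_n)-(x_1^{x_i},\dots,x_{i-1}^{x_i},x_{i+1},\dots,x_n)\bigr]$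 for $n\ge2$ and $\partial=0$ for $n\le1$. $C^D_n(X)$ is the subcomplex generated by tuples with $x_i=x_{i+1}$ for some $i$; $H^Q_n(X)$ is the homology of $C^R_n(X)/C^D_n(X)$. The linear extension of a $2$-cocycle $\theta$ vanishes on boundaries and degenerate chains, so induces a homomorphism $\theta:H^Q_2(X)\to A$; a quandle homomorphism $\rho$ induces $\rho_*$ on $H^Q_2$. In $\mathbb{Z}[A]$, $1\cdot a$ is the basis element of $a\in A$. With $f_\theta(x,y)=1\cdot\theta(x,y)$, define for each $j$ the map $\partial_j:FQ(S)\to\mathbb{Z}[A]$ by $\partial_j(x^y)=f_\theta(\rho(x),\rho(y))\,\partial_j(x)$ (elements projected to $Q$) and $\partial_j(x_i)=\delta_{ij}$; for a relator $r=(w_1,w_2)$ put $\partial_j(r)=\partial_j(w_1)-\partial_j(w_2)$. $A(Q,\rho;f_\theta,0)$ is the $m\times n$ matrix $(\partial_j(r_i))$. $E_0$ of an $m\times n$ matrix is the ideal generated by its $n\times n$ minors if $n\le m$, and $0$ if $m<n$. *)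

theory Defs
  imports "HOL-Library.Poly_Mapping" "Jordan_Normal_Form.Determinant" "Jordan_Normal_Form.DL_Submatrix"
begin

section \<open>Quandles (carrier-based, operation x \<triangleright> y written op x y for x^y)\<close>

definition quandle :: "'a set \<Rightarrow> ('a \<Rightarrow> 'a \<Rightarrow> 'a) \<Rightarrow> bool" where
  "quandle X op \<longleftrightarrow>
     (\<forall>x\<in>X. \<forall>y\<in>X. op x y \<in> X) \<and>
     (\<forall>x\<in>X. op x x = x) \<and>
     (\<forall>y\<in>X. bij_betw (\<lambda>z. op z y) X X) \<and>
     (\<forall>x\<in>X. \<forall>y\<in>X. \<forall>z\<in>X. op (op x y) z = op (op x z) (op y z))"

definition qinv :: "'a set \<Rightarrow> ('a \<Rightarrow> 'a \<Rightarrow> 'a) \<Rightarrow> 'a \<Rightarrow> 'a \<Rightarrow> 'a" where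
  "qinv X op x y = inv_into X (\<lambda>z. op z y) x"

definition quandle_connected :: "'a set \<Rightarrow> ('a \<Rightarrow> 'a \<Rightarrow> 'a) \<Rightarrow> bool" where
  "quandle_connected X op \<longleftrightarrow> quandle X op \<and>
     (\<forall>x\<in>X. \<forall>y\<in>X. (x, y) \<in>
        ({(a, op a z) | a z. a \<in> X \<and> z \<in> X} \<union> {(a, qinv X op a z) | a z. a \<in> X \<and> z \<in> X})\<^sup>*)"

definition quandle_hom ::
  "'a set \<Rightarrow> ('a \<Rightarrow> 'a \<Rightarrow> 'a) \<Rightarrow> 'c set \<Rightarrow> ('c \<Rightarrow> 'c \<Rightarrow> 'c) \<Rightarrow> ('a \<Rightarrow> 'c) \<Rightarrow> bool" where
  "quandle_hom X op Y op' f \<longleftrightarrow> (\<forall>x\<in>X. f x \<in> Y) \<and> (\<forall>x\<in>X. \<forall>y\<in>X. f (op x y) = op' (f x) (f y))"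

definition quandle_2cocycle :: "'a set \<Rightarrow> ('a \<Rightarrow> 'a \<Rightarrow> 'a) \<Rightarrow> ('a \<Rightarrow> 'a \<Rightarrow> 'b::ab_group_add) \<Rightarrow> bool" where
  "quandle_2cocycle X op \<theta> \<longleftrightarrow>
     (\<forall>x\<in>X. \<theta> x x = 0) \<and>
     (\<forall>x\<in>X. \<forall>y\<in>X. \<forall>z\<in>X. \<theta> x y + \<theta> (op x y) z = \<theta> x z + \<theta> (op x z) (op y z))"

text \<open>Terms: generator, x^y, x^(y^-1).\<close>
datatype 'v fqterm = Gen 'v | Rop "'v fqterm" "'v fqterm" | Rinv "'v fqterm" "'v fqterm"

fun gens :: "'v fqterm \<Rightarrow> 'v set" where
  "gens (Gen v) = {v}"
| "gens (Rop s t) = gens s \<union> gens t"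
| "gens (Rinv s t) = gens s \<union> gens t"

definition wf_term :: "nat \<Rightarrow> nat fqterm \<Rightarrow> bool" where
  "wf_term n t \<longleftrightarrow> gens t \<subseteq> {..<n}"

text \<open>The smallest congruence on terms in x_0,...,x_(n-1) containing the quandle axioms
  (hence the free quandle FQ(S)) and the relators R.\<close>
inductive_set pcong :: "nat \<Rightarrow> (nat fqterm \<times> nat fqterm) set \<Rightarrow> (nat fqterm \<times> nat fqterm) set"
  for n R where
  refl: "wf_term n t \<Longrightarrow> (t, t) \<in> pcong n R"
| sym: "(s, t) \<in> pcong n R \<Longrightarrow> (t, s) \<in> pcong n R"
| trans: "(s, t) \<in> pcong n R \<Longrightarrow> (t, u) \<in> pcong n R \<Longrightarrow> (s, u) \<in> pcong n R"
| rel: "(s, t) \<in> R \<Longrightarrow> wf_term n s \<Longrightarrow> wf_term n t \<Longrightarrow> (s, t) \<in> pcong n R"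
| cong_op: "(a, b) \<in> pcong n R \<Longrightarrow> (c, d) \<in> pcong n R \<Longrightarrow> (Rop a c, Rop b d) \<in> pcong n R"
| cong_inv: "(a, b) \<in> pcong n R \<Longrightarrow> (c, d) \<in> pcong n R \<Longrightarrow> (Rinv a c, Rinv b d) \<in> pcong n R"
| idem: "wf_term n a \<Longrightarrow> (Rop a a, a) \<in> pcong n R"
| inv_op: "wf_term n a \<Longrightarrow> wf_term n b \<Longrightarrow> (Rop (Rinv a b) b, a) \<in> pcong n R"
| op_inv: "wf_term n a \<Longrightarrow> wf_term n b \<Longrightarrow> (Rinv (Rop a b) b, a) \<in> pcong n R"
| dist: "wf_term n a \<Longrightarrow> wf_term n b \<Longrightarrow> wf_term n c \<Longrightarrow>
          (Rop (Rop a b) c, Rop (Rop a c) (Rop b c)) \<in> pcong n R"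

definition pres_class :: "nat \<Rightarrow> (nat fqterm \<times> nat fqterm) set \<Rightarrow> nat fqterm \<Rightarrow> nat fqterm set" where
  "pres_class n R t = pcong n R `` {t}"

definition pres_car :: "nat \<Rightarrow> (nat fqterm \<times> nat fqterm) set \<Rightarrow> nat fqterm set set" where
  "pres_car n R = {t. wf_term n t} // pcong n R"

definition pres_op :: "nat \<Rightarrow> (nat fqterm \<times> nat fqterm) set \<Rightarrow> nat fqterm set \<Rightarrow> nat fqterm set \<Rightarrow> nat fqterm set" where
  "pres_op n R C D = pres_class n R (Rop (SOME c. c \<in> C) (SOME d. d \<in> D))"

definition chains :: "'x set \<Rightarrow> ('x \<Rightarrow>\<^sub>0 int) set" where
  "chains S = {c. Poly_Mapping.keys c \<subseteq> S}"

definition bd2 :: "('a \<Rightarrow> 'a \<Rightarrow> 'a) \<Rightarrow> ('a \<times> 'a \<Rightarrow>\<^sub>0 int) \<Rightarrow> ('a \<Rightarrow>\<^sub>0 int)" where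
  "bd2 op = frag_extend (\<lambda>(x, y). frag_of x - frag_of (op x y))"

definition bd3 :: "('a \<Rightarrow> 'a \<Rightarrow> 'a) \<Rightarrow> ('a \<times> 'a \<times> 'a \<Rightarrow>\<^sub>0 int) \<Rightarrow> ('a \<times> 'a \<Rightarrow>\<^sub>0 int)" where
  "bd3 op = frag_extend (\<lambda>(x, y, z).
      (frag_of (x, z) - frag_of (op x y, z)) - (frag_of (x, y) - frag_of (op x z, op y z)))"

definition degen2 :: "'a set \<Rightarrow> ('a \<times> 'a \<Rightarrow>\<^sub>0 int) set" where
  "degen2 X = chains {(x, x) | x. x \<in> X}"

text \<open>Denominator of H^Q_2 (viewed in C^R_2): boundaries of 3-chains plus degenerate chains.
  (C^D_1 = 0, so a class in C^Q_2 is a cycle iff its representative has boundary 0.)\<close>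
definition B2 :: "'a set \<Rightarrow> ('a \<Rightarrow> 'a \<Rightarrow> 'a) \<Rightarrow> ('a \<times> 'a \<Rightarrow>\<^sub>0 int) set" where
  "B2 X op = {bd3 op d + e | d e. d \<in> chains (X \<times> X \<times> X) \<and> e \<in> degen2 X}"

definition hclass :: "'a set \<Rightarrow> ('a \<Rightarrow> 'a \<Rightarrow> 'a) \<Rightarrow> ('a \<times> 'a \<Rightarrow>\<^sub>0 int) \<Rightarrow> ('a \<times> 'a \<Rightarrow>\<^sub>0 int) set" where
  "hclass X op z = {z + k | k. k \<in> B2 X op}"

definition H2Q :: "'a set \<Rightarrow> ('a \<Rightarrow> 'a \<Rightarrow> 'a) \<Rightarrow> ('a \<times> 'a \<Rightarrow>\<^sub>0 int) set set" where
  "H2Q X op = {hclass X op z | z. z \<in> chains (X \<times> X) \<and> bd2 op z = 0}"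

definition induced_H2 ::
  "'c set \<Rightarrow> ('c \<Rightarrow> 'c \<Rightarrow> 'c) \<Rightarrow> ('a \<Rightarrow> 'c) \<Rightarrow> ('a \<times> 'a \<Rightarrow>\<^sub>0 int) set \<Rightarrow> ('c \<times> 'c \<Rightarrow>\<^sub>0 int) set" where
  "induced_H2 Y op' f h = hclass Y op' (frag_extend (\<lambda>(x, y). frag_of (f x, f y)) (SOME z. z \<in> h))"

definition int_smul :: "int \<Rightarrow> 'b::ab_group_add \<Rightarrow> 'b" where
  "int_smul k a = (if 0 \<le> k then (\<Sum>i<nat k. a) else - (\<Sum>i<nat (- k). a))"

definition cocycle_lin :: "('a \<Rightarrow> 'a \<Rightarrow> 'b::ab_group_add) \<Rightarrow> ('a \<times> 'a \<Rightarrow>\<^sub>0 int) \<Rightarrow> 'b" where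
  "cocycle_lin \<theta> z = (\<Sum>p\<in>Poly_Mapping.keys z. int_smul (Poly_Mapping.lookup z p) (\<theta> (fst p) (snd p)))"

definition cocycle_H2 :: "('a \<Rightarrow> 'a \<Rightarrow> 'b::ab_group_add) \<Rightarrow> ('a \<times> 'a \<Rightarrow>\<^sub>0 int) set \<Rightarrow> 'b" where
  "cocycle_H2 \<theta> h = cocycle_lin \<theta> (SOME z. z \<in> h)"

text \<open>Z[A] is represented by finitely supported int-valued functions on A (convolution product); 1\<cdot>a is Poly_Mapping.single a 1.\<close>
abbreviation gr :: "'b \<Rightarrow> 'b \<Rightarrow>\<^sub>0 int" where
  "gr a \<equiv> Poly_Mapping.single a 1"

text \<open>partial_j, where ev t = rho(image of t in Q). The clause for x^(y^-1) is forced by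
  (x^(y^-1))^y = x in FQ(S).\<close>
fun fox :: "(nat fqterm \<Rightarrow> 'a) \<Rightarrow> ('a \<Rightarrow> 'a \<Rightarrow> 'b::ab_group_add) \<Rightarrow> nat \<Rightarrow> nat fqterm \<Rightarrow> ('b \<Rightarrow>\<^sub>0 int)" where
  "fox ev \<theta> j (Gen i) = (if i = j then 1 else 0)"
| "fox ev \<theta> j (Rop s t) = gr (\<theta> (ev s) (ev t)) * fox ev \<theta> j s"
| "fox ev \<theta> j (Rinv s t) = gr (- \<theta> (ev (Rinv s t)) (ev t)) * fox ev \<theta> j s"

definition alex_matrix ::
  "nat \<Rightarrow> (nat fqterm \<times> nat fqterm) list \<Rightarrow> (nat fqterm \<Rightarrow> 'a) \<Rightarrow> ('a \<Rightarrow> 'a \<Rightarrow> 'b::ab_group_add)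
     \<Rightarrow> ('b \<Rightarrow>\<^sub>0 int) mat" where
  "alex_matrix n rs ev \<theta> =
     mat (length rs) n (\<lambda>(i, j). fox ev \<theta> j (fst (rs ! i)) - fox ev \<theta> j (snd (rs ! i)))"

definition ideal_gen :: "'r::comm_ring_1 set \<Rightarrow> 'r set" where
  "ideal_gen S = {x. \<exists>F c. finite F \<and> F \<subseteq> S \<and> x = (\<Sum>s\<in>F. c s * s)}"

definition E0 :: "'r::comm_ring_1 mat \<Rightarrow> 'r set" where
  "E0 M = (if dim_col M \<le> dim_row M
           then ideal_gen {det (submatrix M I {..<dim_col M}) | I. I \<subseteq> {..<dim_row M} \<and> card I = dim_col M}
           else {0})"

end

theory Submission
  imports Defs
begin

(* Row i of the Alexander matrix has at most two nonzero entries: 1.w(l_i) in the column of the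
   base generator of the left side l_i of relator i and -1.w(r_i) in that of the right side r_i,
   where w(t) sums the values of theta.rho along the term t.  As Q is connected, the graph on the
   generators with the relators as edges is connected.  Along a spanning tree one builds 2-chains
   P x of Q with boundary x_0 - x; their values p x form a potential for which the defect
   d_i = w(l_i) + p(src i) - w(r_i) - p(tgt i) vanishes on the tree relators, and every d_i is the
   value of theta.rho on a 2-cycle.  Multiplying column j by the unit 1.p(j) makes row i a unit
   times 1.d_i - 1, so by Cramer's rule every maximal minor lies in the ideal generated by the
   1.a - 1; conversely, the minor on the tree rows and one further row i is a unit times
   1.d_i - 1.  Finally, the a with 1.a - 1 in E_0 form a subgroup W containing all d_i, and
   modulo W the potential extends to a 1-cochain on Q with coboundary theta.rho, which therefore
   vanishes modulo W on every 2-cycle. *)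

section \<open>Ideals and units of the group ring\<close>

interpretation ring_module: Modules.module "(*) :: 'r::comm_ring_1 \<Rightarrow> 'r \<Rightarrow> 'r"
  by standard (simp_all add: algebra_simps)

(* In a ring, scale_scale reads a * (b * x) = a * b * x and loops against mult.assoc. *)
declare ring_module.scale_scale [simp del]

lemma ideal_gen_eq_span: "ideal_gen S = ring_module.span S"
  by (auto simp: ideal_gen_def ring_module.span_explicit)

lemma E0_eq_span:
  "E0 M = ring_module.span
     {det (submatrix M I {..<dim_col M}) | I. I \<subseteq> {..<dim_row M} \<and> card I = dim_col M}"
proof (cases "dim_col M \<le> dim_row M")
  case False
  have "\<not> (I \<subseteq> {..<dim_row M} \<and> card I = dim_col M)" for I :: "nat set"
    using card_mono[of "{..<dim_row M}" I] False by auto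
  then have "{det (submatrix M I {..<dim_col M}) | I. I \<subseteq> {..<dim_row M} \<and> card I = dim_col M} = {}"
    by blast
  then show ?thesis
    using False by (simp only: E0_def if_False ring_module.span_empty)
qed (simp add: E0_def ideal_gen_eq_span)

lemma ideal_unit_mult_cancel:
  assumes "ring_module.subspace J" "u dvd 1" "u * x \<in> J"
  shows "x \<in> J"
proof -
  obtain v where v: "1 = u * v" using assms(2) by (rule dvdE)
  have "v * (u * x) \<in> J" by (rule ring_module.subspace_scale[OF assms(1,3)])
  moreover have "v * (u * x) = (u * v) * x" by (simp only: ac_simps)
  ultimately show ?thesis by (simp add: v[symmetric])
qed

lemma gr_add: "gr a * gr b = gr (a + b)"
  by (simp add: mult_single)

lemma gr_unit: "gr (a :: 'b::ab_group_add) dvd 1"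
  by (rule dvdI[of _ _ "gr (- a)"]) (simp add: gr_add)

definition add_subgroup :: "'b::ab_group_add set \<Rightarrow> bool" where
  "add_subgroup W \<longleftrightarrow> 0 \<in> W \<and> (\<forall>a\<in>W. \<forall>b\<in>W. a - b \<in> W)"

lemma add_subgroup_0: "add_subgroup W \<Longrightarrow> 0 \<in> W"
  and add_subgroup_diff: "add_subgroup W \<Longrightarrow> a \<in> W \<Longrightarrow> b \<in> W \<Longrightarrow> a - b \<in> W"
  by (auto simp: add_subgroup_def)

lemma add_subgroup_uminus:
  assumes "add_subgroup W" "a \<in> W" shows "- a \<in> W"
  using add_subgroup_diff[OF assms(1) add_subgroup_0[OF assms(1)] assms(2)] by simp

lemma add_subgroup_add:
  assumes "add_subgroup W" "a \<in> W" "b \<in> W" shows "a + b \<in> W"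
  using add_subgroup_diff[OF assms(1,2) add_subgroup_uminus[OF assms(1,3)]] by simp

text \<open>The kernel of \<open>A \<rightarrow> (\<int>[A]/J)\<^sup>\<times>\<close>.\<close>
lemma add_subgroup_gr_ideal:
  assumes J: "ring_module.subspace J"
  shows "add_subgroup {a. gr a - 1 \<in> J}"
  unfolding add_subgroup_def
proof (intro conjI ballI; clarsimp)
  show "0 \<in> J" by (rule ring_module.subspace_0[OF J])
  fix a b assume a: "gr a - 1 \<in> J" and b: "gr b - 1 \<in> J"
  have "gr (a - b) - 1 = gr (- b) * ((gr a - 1) - (gr b - 1))"
    by (simp add: gr_add algebra_simps)
  then show "gr (a - b) - 1 \<in> J"
    using ring_module.subspace_scale[OF J ring_module.subspace_diff[OF J a b]] by simp
qed

section \<open>Linear extension to chains\<close>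

lemma int_smul_succ: "int_smul (k + 1) a = int_smul k a + a"
proof (cases "0 \<le> k")
  case True
  then have "nat (k + 1) = Suc (nat k)" by simp
  then show ?thesis using True by (simp add: int_smul_def)
next
  case False
  show ?thesis
  proof (cases "k = -1")
    case True then show ?thesis by (simp add: int_smul_def)
  next
    case k: False
    then have "nat (- k) = Suc (nat (- (k + 1)))" using False by simp
    then show ?thesis using False k by (simp add: int_smul_def)
  qed
qed

lemma int_smul_add: "int_smul (k + l) a = int_smul k a + int_smul l a"
proof (induction l rule: int_induct[where k = 0])
  case base then show ?case by (simp add: int_smul_def)
next
  case (step1 i)
  have "int_smul (k + (i + 1)) a = int_smul (k + i) a + a"
    using int_smul_succ[of "k + i"] by (simp add: add.assoc)
  then show ?case using step1(2) by (simp add: int_smul_succ add.assoc)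
next
  case (step2 i)
  have "int_smul (k + i) a = int_smul (k + (i - 1)) a + a"
    and "int_smul i a = int_smul (i - 1) a + a"
    using int_smul_succ[of "k + (i - 1)" a] int_smul_succ[of "i - 1" a] by simp_all
  then show ?case using step2(2) by (simp add: add.assoc)
qed

definition lin_extend :: "('x \<Rightarrow> 'b::ab_group_add) \<Rightarrow> ('x \<Rightarrow>\<^sub>0 int) \<Rightarrow> 'b" where
  "lin_extend f c = (\<Sum>k\<in>Poly_Mapping.keys c. int_smul (Poly_Mapping.lookup c k) (f k))"

lemma lin_extend_superset:
  assumes "finite K" "Poly_Mapping.keys c \<subseteq> K"
  shows "lin_extend f c = (\<Sum>k\<in>K. int_smul (Poly_Mapping.lookup c k) (f k))"
  unfolding lin_extend_def using assms
  by (intro sum.mono_neutral_left) (auto simp: in_keys_iff int_smul_def)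

lemma lin_extend_0 [simp]: "lin_extend f 0 = 0"
  by (simp add: lin_extend_def)

lemma lin_extend_frag_of [simp]: "lin_extend f (frag_of x) = f x"
  by (simp add: lin_extend_def keys_frag_of int_smul_def)

lemma lin_extend_add: "lin_extend f (a + b) = lin_extend f a + lin_extend f b"
proof -
  let ?K = "Poly_Mapping.keys a \<union> Poly_Mapping.keys b"
  have "lin_extend f (a + b) = (\<Sum>k\<in>?K. int_smul (Poly_Mapping.lookup (a + b) k) (f k))"
    by (rule lin_extend_superset) (simp_all add: keys_add)
  also have "\<dots> = (\<Sum>k\<in>?K. int_smul (Poly_Mapping.lookup a k) (f k))
                 + (\<Sum>k\<in>?K. int_smul (Poly_Mapping.lookup b k) (f k))"
    by (simp add: lookup_add int_smul_add sum.distrib)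
  also have "\<dots> = lin_extend f a + lin_extend f b"
    by (simp add: lin_extend_superset[of ?K])
  finally show ?thesis .
qed

lemma lin_extend_diff: "lin_extend f (a - b) = lin_extend f a - lin_extend f b"
  using lin_extend_add[of f "a - b" b] by (simp add: algebra_simps)

lemma lin_extend_frag_extend:
  "lin_extend f (frag_extend (\<lambda>x. frag_of (g x)) c) = lin_extend (\<lambda>x. f (g x)) c"
proof -
  have "Poly_Mapping.keys c \<subseteq> UNIV" by simp
  then show ?thesis
    by (induction c rule: frag_induction) (simp_all add: frag_extend_diff lin_extend_diff)
qed

section \<open>Second quandle homology and cocycle values\<close>

lemma chains_iff: "c \<in> chains S \<longleftrightarrow> Poly_Mapping.keys c \<subseteq> S"
  by (simp add: chains_def)

lemma chains_0 [simp]: "0 \<in> chains S"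
  by (simp add: chains_iff)

lemma chains_frag_of: "x \<in> S \<Longrightarrow> frag_of x \<in> chains S"
  by (simp add: chains_iff keys_frag_of)

lemma chains_add: "a \<in> chains S \<Longrightarrow> b \<in> chains S \<Longrightarrow> a + b \<in> chains S"
  using keys_add[of a b] unfolding chains_iff by blast

lemma chains_diff: "a \<in> chains S \<Longrightarrow> b \<in> chains S \<Longrightarrow> a - b \<in> chains S"
  using keys_diff[of a b] unfolding chains_iff by blast

lemma bd2_0 [simp]: "bd2 op 0 = 0"
  by (simp add: bd2_def)

lemma bd2_frag_of: "bd2 op (frag_of (x, y)) = frag_of x - frag_of (op x y)"
  by (simp add: bd2_def)

lemma bd2_add: "bd2 op (a + b) = bd2 op a + bd2 op b"
  by (simp add: bd2_def frag_extend_add)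

lemma bd2_diff: "bd2 op (a - b) = bd2 op a - bd2 op b"
  by (simp add: bd2_def frag_extend_diff)

lemma bd3_frag_of: "bd3 op (frag_of (x, y, z)) =
   (frag_of (x, z) - frag_of (op x y, z)) - (frag_of (x, y) - frag_of (op x z, op y z))"
  by (simp add: bd3_def)

lemma bd3_diff: "bd3 op (a - b) = bd3 op a - bd3 op b"
  by (simp add: bd3_def frag_extend_diff)

lemma cocycle_lin_eq_lin_extend: "cocycle_lin \<theta> = lin_extend (\<lambda>(x, y). \<theta> x y)"
  by (simp add: fun_eq_iff cocycle_lin_def lin_extend_def case_prod_beta)

lemma cocycle_lin_frag_of: "cocycle_lin \<theta> (frag_of (x, y)) = \<theta> x y"
  and cocycle_lin_add: "cocycle_lin \<theta> (a + b) = cocycle_lin \<theta> a + cocycle_lin \<theta> b"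
  and cocycle_lin_diff: "cocycle_lin \<theta> (a - b) = cocycle_lin \<theta> a - cocycle_lin \<theta> b"
  by (simp_all add: cocycle_lin_eq_lin_extend lin_extend_add lin_extend_diff)

lemma cocycle_lin_0 [simp]: "cocycle_lin \<theta> 0 = 0"
  by (simp add: cocycle_lin_eq_lin_extend)

lemma cocycle_lin_bd3:
  assumes "quandle_2cocycle X op \<theta>" "d \<in> chains (X \<times> X \<times> X)"
  shows "cocycle_lin \<theta> (bd3 op d) = 0"
proof -
  have "Poly_Mapping.keys d \<subseteq> X \<times> X \<times> X" using assms(2) by (simp add: chains_iff)
  then show ?thesis
  proof (induction d rule: frag_induction)
    case zero then show ?case by (simp add: bd3_def)
  next
    case (one p)
    then obtain x y z where p: "p = (x, y, z)" "x \<in> X" "y \<in> X" "z \<in> X" by auto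
    then have "\<theta> x y + \<theta> (op x y) z = \<theta> x z + \<theta> (op x z) (op y z)"
      using assms(1) unfolding quandle_2cocycle_def by blast
    then show ?case
      unfolding p bd3_frag_of cocycle_lin_diff cocycle_lin_frag_of by (simp add: algebra_simps)
  next
    case (diff a b) then show ?case by (simp add: bd3_diff cocycle_lin_diff)
  qed
qed

lemma cocycle_lin_degen2:
  assumes "quandle_2cocycle X op \<theta>" "e \<in> degen2 X"
  shows "cocycle_lin \<theta> e = 0"
proof -
  have "Poly_Mapping.keys e \<subseteq> {(x, x) | x. x \<in> X}" using assms(2) by (simp add: degen2_def chains_iff)
  then show ?thesis
  proof (induction e rule: frag_induction)
    case (one p)
    then show ?case using assms(1) by (auto simp: quandle_2cocycle_def cocycle_lin_frag_of)
  qed (simp_all add: cocycle_lin_diff)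
qed

lemma cocycle_lin_B2:
  assumes "quandle_2cocycle X op \<theta>" "k \<in> B2 X op"
  shows "cocycle_lin \<theta> k = 0"
proof -
  obtain d e where "k = bd3 op d + e" "d \<in> chains (X \<times> X \<times> X)" "e \<in> degen2 X"
    using assms(2) unfolding B2_def by blast
  then show ?thesis
    using cocycle_lin_bd3[OF assms(1)] cocycle_lin_degen2[OF assms(1)] by (simp add: cocycle_lin_add)
qed

lemma zero_in_B2: "0 \<in> B2 X op"
  unfolding B2_def degen2_def by (rule CollectI, rule exI[of _ 0], rule exI[of _ 0]) (simp add: bd3_def chains_iff)

lemma quandle_2cocycle_pullback:
  assumes "quandle_hom Y opY X opX f" "quandle_2cocycle X opX \<theta>"
  shows "quandle_2cocycle Y opY (\<lambda>x y. \<theta> (f x) (f y))"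
  using assms unfolding quandle_hom_def quandle_2cocycle_def by simp

lemma cocycle_lin_pushforward:
  "cocycle_lin \<theta> (frag_extend (\<lambda>(x, y). frag_of (f x, f y)) c) = cocycle_lin (\<lambda>x y. \<theta> (f x) (f y)) c"
  by (simp add: cocycle_lin_eq_lin_extend split_def lin_extend_frag_extend)

lemma some_in_hclass: "(SOME w. w \<in> hclass X op z) - z \<in> B2 X op"
proof -
  have "z + 0 \<in> hclass X op z" unfolding hclass_def using zero_in_B2 by blast
  then have "(SOME w. w \<in> hclass X op z) \<in> hclass X op z" by (rule someI)
  then show ?thesis unfolding hclass_def by auto
qed

lemma cocycle_H2_induced_hclass:
  assumes hom: "quandle_hom Y opY X opX f" and coc: "quandle_2cocycle X opX \<theta>"
  shows "cocycle_H2 \<theta> (induced_H2 X opX f (hclass Y opY z)) = cocycle_lin (\<lambda>x y. \<theta> (f x) (f y)) z"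
proof -
  define z' where "z' = (SOME w. w \<in> hclass Y opY z)"
  define push where "push = frag_extend (\<lambda>(x, y). frag_of (f x, f y)) z'"
  have "cocycle_H2 \<theta> (induced_H2 X opX f (hclass Y opY z)) = cocycle_lin \<theta> (SOME w. w \<in> hclass X opX push)"
    by (simp add: cocycle_H2_def induced_H2_def push_def z'_def)
  also have "\<dots> = cocycle_lin \<theta> push"
    using cocycle_lin_B2[OF coc some_in_hclass] by (simp add: cocycle_lin_diff)
  also have "\<dots> = cocycle_lin (\<lambda>x y. \<theta> (f x) (f y)) z'"
    unfolding push_def by (rule cocycle_lin_pushforward)
  also have "\<dots> = cocycle_lin (\<lambda>x y. \<theta> (f x) (f y)) z"
    using cocycle_lin_B2[OF quandle_2cocycle_pullback[OF hom coc] some_in_hclass]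
    by (simp add: cocycle_lin_diff z'_def)
  finally show ?thesis .
qed

lemma image_cocycle_H2_induced:
  assumes "quandle_hom Y opY X opX f" "quandle_2cocycle X opX \<theta>"
  shows "(\<lambda>h. cocycle_H2 \<theta> (induced_H2 X opX f h)) ` H2Q Y opY =
    {cocycle_lin (\<lambda>x y. \<theta> (f x) (f y)) z | z. z \<in> chains (Y \<times> Y) \<and> bd2 opY z = 0}"
    (is "?L = ?R")
proof
  show "?L \<subseteq> ?R"
    using cocycle_H2_induced_hclass[OF assms] by (auto simp: H2Q_def)
  show "?R \<subseteq> ?L"
  proof
    fix a assume "a \<in> ?R"
    then obtain z where z: "z \<in> chains (Y \<times> Y)" "bd2 opY z = 0"
      and a: "a = cocycle_lin (\<lambda>x y. \<theta> (f x) (f y)) z" by blast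
    have "a = cocycle_H2 \<theta> (induced_H2 X opX f (hclass Y opY z))"
      unfolding a cocycle_H2_induced_hclass[OF assms] ..
    moreover have "hclass Y opY z \<in> H2Q Y opY" using z unfolding H2Q_def by blast
    ultimately show "a \<in> ?L" by (rule image_eqI)
  qed
qed

section \<open>Presented quandles\<close>

lemma wf_term_Gen [simp]: "wf_term n (Gen v) \<longleftrightarrow> v < n"
  and wf_term_Rop [simp]: "wf_term n (Rop s t) \<longleftrightarrow> wf_term n s \<and> wf_term n t"
  and wf_term_Rinv [simp]: "wf_term n (Rinv s t) \<longleftrightarrow> wf_term n s \<and> wf_term n t"
  by (auto simp: wf_term_def)

lemma pcong_wf_term: "(s, t) \<in> pcong n R \<Longrightarrow> wf_term n s \<and> wf_term n t"
  by (induction rule: pcong.induct) auto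

lemma pres_class_iff: "u \<in> pres_class n R t \<longleftrightarrow> (t, u) \<in> pcong n R"
  by (simp add: pres_class_def)

lemma pres_class_eq:
  assumes "(s, t) \<in> pcong n R" shows "pres_class n R s = pres_class n R t"
  using assms pcong.sym[OF assms] unfolding pres_class_def by (auto intro: pcong.trans)

lemma pres_class_in_car: "wf_term n t \<Longrightarrow> pres_class n R t \<in> pres_car n R"
  unfolding pres_car_def pres_class_def by (rule quotientI) simp

lemma pres_car_cases:
  assumes "C \<in> pres_car n R" obtains t where "wf_term n t" "C = pres_class n R t"
  using assms unfolding pres_car_def pres_class_def by (auto elim!: quotientE)

lemma pcong_some_pres_class:
  assumes "wf_term n t" shows "(t, SOME c. c \<in> pres_class n R t) \<in> pcong n R"
proof -
  have "t \<in> pres_class n R t" using assms by (simp add: pres_class_iff pcong.refl)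
  then show ?thesis unfolding pres_class_iff[symmetric] by (rule someI)
qed

lemma pres_op_class:
  assumes "wf_term n s" "wf_term n t"
  shows "pres_op n R (pres_class n R s) (pres_class n R t) = pres_class n R (Rop s t)"
  unfolding pres_op_def
  using pcong_some_pres_class[OF assms(1)] pcong_some_pres_class[OF assms(2)]
  by (intro pres_class_eq) (auto intro: pcong.cong_op pcong.sym)

lemma pres_class_Rop_Rinv:
  "wf_term n s \<Longrightarrow> wf_term n t \<Longrightarrow> pres_class n R (Rop (Rinv s t) t) = pres_class n R s"
  by (rule pres_class_eq[OF pcong.inv_op])

section \<open>Fox derivatives along a term\<close>

fun base :: "'v fqterm \<Rightarrow> 'v" where
  "base (Gen v) = v"
| "base (Rop s t) = base s"
| "base (Rinv s t) = base s"

lemma wf_term_base: "wf_term n t \<Longrightarrow> base t < n"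
  by (induction t) auto

fun term_weight :: "(nat fqterm \<Rightarrow> 'a) \<Rightarrow> ('a \<Rightarrow> 'a \<Rightarrow> 'b::ab_group_add) \<Rightarrow> nat fqterm \<Rightarrow> 'b" where
  "term_weight ev \<theta> (Gen v) = 0"
| "term_weight ev \<theta> (Rop s t) = term_weight ev \<theta> s + \<theta> (ev s) (ev t)"
| "term_weight ev \<theta> (Rinv s t) = term_weight ev \<theta> s - \<theta> (ev (Rinv s t)) (ev t)"

lemma fox_eq_term_weight:
  "fox ev \<theta> j w = (if base w = j then gr (term_weight ev \<theta> w) else 0)"
  by (induction w) (simp_all add: gr_add add.commute)

fun term_chain :: "(nat fqterm \<Rightarrow> 'q) \<Rightarrow> nat fqterm \<Rightarrow> ('q \<times> 'q \<Rightarrow>\<^sub>0 int)" where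
  "term_chain cl (Gen v) = 0"
| "term_chain cl (Rop s t) = term_chain cl s + frag_of (cl s, cl t)"
| "term_chain cl (Rinv s t) = term_chain cl s - frag_of (cl (Rinv s t), cl t)"

lemma term_chain_in_chains:
  "wf_term n w \<Longrightarrow> term_chain (pres_class n R) w \<in> chains (pres_car n R \<times> pres_car n R)"
  by (induction w) (auto intro!: chains_add chains_diff chains_frag_of pres_class_in_car)

lemma bd2_term_chain:
  "wf_term n w \<Longrightarrow> bd2 (pres_op n R) (term_chain (pres_class n R) w)
     = frag_of (pres_class n R (Gen (base w))) - frag_of (pres_class n R w)"
  by (induction w) (simp_all add: bd2_add bd2_diff bd2_frag_of pres_op_class pres_class_Rop_Rinv)

lemma cocycle_lin_term_chain:
  "cocycle_lin (\<lambda>x y. \<theta> (f x) (f y)) (term_chain cl w) = term_weight (\<lambda>t. f (cl t)) \<theta> w"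
  by (induction w) (simp_all add: cocycle_lin_add cocycle_lin_diff cocycle_lin_frag_of)

section \<open>Minors of submatrices\<close>

lemma card_less_in:
  fixes I :: "nat set" assumes "finite I" "r \<in> I" shows "card {a\<in>I. a < r} < card I"
proof -
  have "r \<notin> {a\<in>I. a < r}" by simp
  then have "{a\<in>I. a < r} \<subset> I" using assms(2) by blast
  then show ?thesis using assms(1) by (simp add: psubset_card_mono)
qed

lemma bij_betw_pick:
  assumes fin: "finite I" shows "bij_betw (pick I) {..<card I} I"
proof (rule bij_betw_imageI)
  show "inj_on (pick I) {..<card I}"
  proof (rule inj_onI)
    fix i j assume i: "i \<in> {..<card I}" and j: "j \<in> {..<card I}" and eq: "pick I i = pick I j"
    have "i = card {a\<in>I. a < pick I i}" using card_pick_le[of i I] i by simp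
    also have "\<dots> = card {a\<in>I. a < pick I j}" by (simp only: eq)
    also have "\<dots> = j" using card_pick_le[of j I] j by simp
    finally show "i = j" .
  qed
  have "pick I ` {..<card I} \<subseteq> I" by (auto intro: pick_in_set_le)
  moreover have "I \<subseteq> pick I ` {..<card I}"
  proof
    fix i assume i: "i \<in> I"
    have "card {a\<in>I. a < i} \<in> {..<card I}" using card_less_in[OF fin i] by simp
    then show "i \<in> pick I ` {..<card I}" using pick_card_in_set[OF i] by (metis image_eqI)
  qed
  ultimately show "pick I ` {..<card I} = I" by (rule equalityI)
qed

lemma pick_Diff:
  assumes fin: "finite I" and ia: "ia < card I" and k: "k < card I - 1"
  shows "pick (I - {pick I ia}) k = (if k < ia then pick I k else pick I (Suc k))"
proof -
  let ?a = "pick I ia"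
  define b where "b = (if k < ia then pick I k else pick I (Suc k))"
  have aI: "?a \<in> I" using pick_in_set_le[OF ia] .
  have bc: "b \<in> I - {?a} \<and> card {x\<in>I - {?a}. x < b} = k"
  proof (cases "k < ia")
    case True
    have kI: "k < card I" using True ia by linarith
    have lt: "pick I k < ?a" using pick_mono_le[OF ia True] .
    have "{x\<in>I - {?a}. x < pick I k} = {x\<in>I. x < pick I k}" using lt by auto
    then show ?thesis
      using True pick_in_set_le[OF kI] card_pick_le[OF kI] lt unfolding b_def by auto
  next
    case False
    have kI: "Suc k < card I" using k by linarith
    have lt: "?a < pick I (Suc k)" using pick_mono_le[OF kI] False by simp
    have e: "{x\<in>I - {?a}. x < pick I (Suc k)} = {x\<in>I. x < pick I (Suc k)} - {?a}" by auto
    have "?a \<in> {x\<in>I. x < pick I (Suc k)}" using aI lt by simp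
    then have "card {x\<in>I - {?a}. x < pick I (Suc k)} = Suc k - 1"
      unfolding e using card_pick_le[OF kI] fin by (simp add: card_Diff_singleton)
    then show ?thesis
      using False pick_in_set_le[OF kI] lt unfolding b_def by auto
  qed
  then have bI: "b \<in> I - {?a}" and cb: "card {x\<in>I - {?a}. x < b} = k" by auto
  have "pick (I - {?a}) (card {x\<in>I - {?a}. x < b}) = b" using pick_card_in_set[OF bI] .
  then show ?thesis using cb unfolding b_def by simp
qed

lemma Collect_less_in: "I \<subseteq> {..<N} \<Longrightarrow> {i. i < N \<and> i \<in> I} = I"
  by auto

lemma submatrix_carrier:
  assumes "I \<subseteq> {..<dim_row M}" "J \<subseteq> {..<dim_col M}"
  shows "submatrix M I J \<in> carrier_mat (card I) (card J)"
proof (rule carrier_matI)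
  show "dim_row (submatrix M I J) = card I"
    unfolding dim_submatrix(1) Collect_less_in[OF assms(1)] ..
  show "dim_col (submatrix M I J) = card J"
    unfolding dim_submatrix(2) Collect_less_in[OF assms(2)] ..
qed

lemma submatrix_nth:
  assumes "I \<subseteq> {..<dim_row M}" "J \<subseteq> {..<dim_col M}" "i < card I" "j < card J"
  shows "submatrix M I J $$ (i, j) = M $$ (pick I i, pick J j)"
  by (rule submatrix_index) (simp_all only: Collect_less_in assms)

lemma mat_delete_submatrix:
  assumes I: "I \<subseteq> {..<dim_row M}" and J: "J \<subseteq> {..<dim_col M}"
    and ia: "ia < card I" and jb: "jb < card J"
  shows "mat_delete (submatrix M I J) ia jb = submatrix M (I - {pick I ia}) (J - {pick J jb})"
proof -
  have finI: "finite I" and finJ: "finite J" using I J finite_subset by blast+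
  have I': "I - {pick I ia} \<subseteq> {..<dim_row M}" and J': "J - {pick J jb} \<subseteq> {..<dim_col M}"
    using I J by auto
  have cI: "card (I - {pick I ia}) = card I - 1" and cJ: "card (J - {pick J jb}) = card J - 1"
    using pick_in_set_le[OF ia] pick_in_set_le[OF jb] finI finJ by simp_all
  show ?thesis
  proof (rule eq_matI)
    fix i j assume "i < dim_row (submatrix M (I - {pick I ia}) (J - {pick J jb}))"
      and "j < dim_col (submatrix M (I - {pick I ia}) (J - {pick J jb}))"
    then have i: "i < card I - 1" and j: "j < card J - 1"
      using submatrix_carrier[OF I' J'] cI cJ by auto
    have "mat_delete (submatrix M I J) ia jb $$ (i, j) =
      submatrix M I J $$ (if i < ia then i else Suc i, if j < jb then j else Suc j)"
      unfolding mat_delete_def using i j submatrix_carrier[OF I J] by simp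
    also have "\<dots> = M $$ (pick I (if i < ia then i else Suc i), pick J (if j < jb then j else Suc j))"
      using i j by (intro submatrix_nth[OF I J]) auto
    also have "\<dots> = submatrix M (I - {pick I ia}) (J - {pick J jb}) $$ (i, j)"
      using i j cI cJ pick_Diff[OF finI ia i] pick_Diff[OF finJ jb j]
      by (simp add: submatrix_nth[OF I' J'] if_distrib)
    finally show "mat_delete (submatrix M I J) ia jb $$ (i, j) =
      submatrix M (I - {pick I ia}) (J - {pick J jb}) $$ (i, j)" .
  qed (use submatrix_carrier[OF I J] submatrix_carrier[OF I' J'] cI cJ in simp_all)
qed

lemma det_mult_eq_sum_cofactor:
  fixes N :: "'a :: comm_ring_1 mat"
  assumes N: "N \<in> carrier_mat n n" and r: "r < n"
  shows "det N * y r = (\<Sum>k<n. cofactor N k r * (\<Sum>c<n. N $$ (k, c) * y c))"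
proof -
  have A: "adj_mat N * N = det N \<cdot>\<^sub>m 1\<^sub>m n" using adj_mat[OF N] by simp
  have adjc: "adj_mat N \<in> carrier_mat n n" using adj_mat[OF N] by simp
  have ent: "(\<Sum>k<n. cofactor N k r * N $$ (k, c)) = (if r = c then det N else 0)" if c: "c < n" for c
  proof -
    have "(adj_mat N * N) $$ (r, c) = row (adj_mat N) r \<bullet> col N c" using adjc N r c by simp
    also have "\<dots> = (\<Sum>k \<in> {0..<n}. row (adj_mat N) r $ k * col N c $ k)"
      unfolding scalar_prod_def using N by simp
    also have "\<dots> = (\<Sum>k<n. cofactor N k r * N $$ (k, c))"
      using adjc N r c by (auto simp: adj_mat_def lessThan_atLeast0 intro!: sum.cong)
    finally have "(adj_mat N * N) $$ (r, c) = (\<Sum>k<n. cofactor N k r * N $$ (k, c))" .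
    moreover have "(adj_mat N * N) $$ (r, c) = (if r = c then det N else 0)"
      unfolding A using r c by simp
    ultimately show ?thesis by simp
  qed
  have "(\<Sum>k<n. cofactor N k r * (\<Sum>c<n. N $$ (k, c) * y c)) =
        (\<Sum>k<n. \<Sum>c<n. cofactor N k r * N $$ (k, c) * y c)"
    by (simp add: sum_distrib_left mult.assoc)
  also have "\<dots> = (\<Sum>c<n. \<Sum>k<n. cofactor N k r * N $$ (k, c) * y c)" by (rule sum.swap)
  also have "\<dots> = (\<Sum>c<n. (\<Sum>k<n. cofactor N k r * N $$ (k, c)) * y c)"
    by (simp add: sum_distrib_right)
  also have "\<dots> = (\<Sum>c<n. (if r = c then det N * y c else 0))"
    using ent by (intro sum.cong) auto
  also have "\<dots> = det N * y r" using r by simp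
  finally show ?thesis by simp
qed

text \<open>Cramer's rule for the minor on rows \<open>I\<close> and columns \<open>J\<close>, expanded along column \<open>c\<close>.\<close>
lemma det_submatrix_mult:
  fixes M :: "'a::comm_ring_1 mat"
  assumes I: "I \<subseteq> {..<dim_row M}" and J: "J \<subseteq> {..<dim_col M}"
    and IJ: "card I = card J" and c: "c \<in> J"
  shows "det (submatrix M I J) * y c =
    (\<Sum>r\<in>I. (-1) ^ (card {a\<in>I. a < r} + card {b\<in>J. b < c}) * det (submatrix M (I - {r}) (J - {c}))
        * (\<Sum>j\<in>J. M $$ (r, j) * y j))"
proof -
  let ?N = "submatrix M I J" and ?c = "card {b\<in>J. b < c}"
  have finI: "finite I" and finJ: "finite J" using I J finite_subset by blast+
  have N: "?N \<in> carrier_mat (card I) (card I)" using submatrix_carrier[OF I J] IJ by simp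
  have cpos: "?c < card I" "pick J ?c = c"
    using card_less_in[OF finJ c] IJ pick_card_in_set[OF c] by auto
  have "det ?N * y c = det ?N * (y \<circ> pick J) ?c" using cpos by simp
  also have "\<dots> = (\<Sum>i<card I. cofactor ?N i ?c * (\<Sum>j<card I. ?N $$ (i, j) * (y \<circ> pick J) j))"
    by (rule det_mult_eq_sum_cofactor[OF N cpos(1)])
  also have "\<dots> = (\<Sum>i<card I. (-1) ^ (card {a\<in>I. a < pick I i} + ?c)
      * det (submatrix M (I - {pick I i}) (J - {c})) * (\<Sum>j\<in>J. M $$ (pick I i, j) * y j))"
  proof (rule sum.cong[OF HOL.refl])
    fix i assume i: "i \<in> {..<card I}"
    have "cofactor ?N i ?c = (-1) ^ (card {a\<in>I. a < pick I i} + ?c)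
        * det (submatrix M (I - {pick I i}) (J - {c}))"
      unfolding cofactor_def using mat_delete_submatrix[OF I J, of i ?c] i cpos IJ card_pick_le
      by simp
    moreover have "(\<Sum>j<card I. ?N $$ (i, j) * (y \<circ> pick J) j) = (\<Sum>j\<in>J. M $$ (pick I i, j) * y j)"
    proof -
      have "(\<Sum>j<card I. ?N $$ (i, j) * (y \<circ> pick J) j)
          = (\<Sum>j<card J. M $$ (pick I i, pick J j) * y (pick J j))"
        using i IJ by (intro sum.cong) (simp_all add: submatrix_nth[OF I J])
      also have "\<dots> = (\<Sum>j\<in>J. M $$ (pick I i, j) * y j)"
        by (rule sum.reindex_bij_betw[OF bij_betw_pick[OF finJ]])
      finally show ?thesis .
    qed
    ultimately show "cofactor ?N i ?c * (\<Sum>j<card I. ?N $$ (i, j) * (y \<circ> pick J) j) =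
      (-1) ^ (card {a\<in>I. a < pick I i} + ?c) * det (submatrix M (I - {pick I i}) (J - {c}))
        * (\<Sum>j\<in>J. M $$ (pick I i, j) * y j)"
      by simp
  qed
  also have "\<dots> = (\<Sum>r\<in>I. (-1) ^ (card {a\<in>I. a < r} + ?c) * det (submatrix M (I - {r}) (J - {c}))
        * (\<Sum>j\<in>J. M $$ (r, j) * y j))"
    by (rule sum.reindex_bij_betw[OF bij_betw_pick[OF finI]])
  finally show ?thesis .
qed

lemma det_submatrix_column:
  fixes M :: "'a::comm_ring_1 mat"
  assumes I: "I \<subseteq> {..<dim_row M}" and J: "J \<subseteq> {..<dim_col M}"
    and IJ: "card I = card J" and c: "c \<in> J" and r: "r \<in> I"
    and zero: "\<And>r'. r' \<in> I \<Longrightarrow> r' \<noteq> r \<Longrightarrow> M $$ (r', c) = 0"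
  shows "det (submatrix M I J) = (-1) ^ (card {a\<in>I. a < r} + card {b\<in>J. b < c})
    * M $$ (r, c) * det (submatrix M (I - {r}) (J - {c}))"
proof -
  define y :: "nat \<Rightarrow> 'a" where "y j = (if j = c then 1 else 0)" for j
  have finI: "finite I" and finJ: "finite J" using I J finite_subset by blast+
  have column: "(\<Sum>j\<in>J. M $$ (r', j) * y j) = M $$ (r', c)" for r'
  proof -
    have "(\<Sum>j\<in>J. M $$ (r', j) * y j) = (\<Sum>j\<in>J. if j = c then M $$ (r', j) else 0)"
      by (rule sum.cong) (simp_all add: y_def)
    then show ?thesis using finJ c by simp
  qed
  have "det (submatrix M I J) = det (submatrix M I J) * y c" by (simp add: y_def)
  also have "\<dots> = (\<Sum>r'\<in>I. (-1) ^ (card {a\<in>I. a < r'} + card {b\<in>J. b < c})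
      * det (submatrix M (I - {r'}) (J - {c})) * M $$ (r', c))"
    unfolding det_submatrix_mult[OF I J IJ c] column ..
  also have "\<dots> = (\<Sum>r'\<in>I. if r' = r then (-1) ^ (card {a\<in>I. a < r} + card {b\<in>J. b < c})
      * det (submatrix M (I - {r}) (J - {c})) * M $$ (r, c) else 0)"
    using zero by (intro sum.cong) auto
  also have "\<dots> = (-1) ^ (card {a\<in>I. a < r} + card {b\<in>J. b < c})
      * det (submatrix M (I - {r}) (J - {c})) * M $$ (r, c)"
    using finI r by simp
  finally show ?thesis by (simp add: ac_simps)
qed

lemma det_submatrix_triangular_unit:
  fixes M :: "'a::comm_ring_1 mat" and L :: "'i::linorder set"
  assumes "finite L" "inj_on e L" "inj_on v L"
    and "e ` L \<subseteq> {..<dim_row M}" "v ` L \<subseteq> {..<dim_col M}"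
    and "\<And>l. l \<in> L \<Longrightarrow> M $$ (e l, v l) dvd 1"
    and "\<And>l l'. l \<in> L \<Longrightarrow> l' \<in> L \<Longrightarrow> l' < l \<Longrightarrow> M $$ (e l', v l) = 0"
  shows "det (submatrix M (e ` L) (v ` L)) dvd 1"
  using assms
proof (induction L rule: finite_linorder_max_induct)
  case empty
  have "submatrix M {} {} = 1\<^sub>m 0" by (rule eq_matI) (auto simp: dim_submatrix)
  then show ?case by simp
next
  case (insert b A)
  have bA: "b \<notin> A" using insert.hyps(2) by blast
  have eb: "e ` insert b A - {e b} = e ` A" and vb: "v ` insert b A - {v b} = v ` A"
    using insert.prems(1,2) bA by (auto simp: inj_on_def)
  have "det (submatrix M (e ` insert b A) (v ` insert b A)) =
      (-1) ^ (card {a\<in>e ` insert b A. a < e b} + card {a\<in>v ` insert b A. a < v b})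
      * M $$ (e b, v b) * det (submatrix M (e ` A) (v ` A))"
    unfolding eb[symmetric] vb[symmetric]
  proof (rule det_submatrix_column)
    show "card (e ` insert b A) = card (v ` insert b A)"
      using insert.prems(1,2) by (simp only: card_image)
    show "M $$ (r', v b) = 0" if "r' \<in> e ` insert b A" "r' \<noteq> e b" for r'
      using that insert.hyps(2) insert.prems(6) by auto
  qed (use insert.prems(3,4) in auto)
  moreover have "det (submatrix M (e ` A) (v ` A)) dvd 1"
  proof (rule insert.IH)
    show "inj_on e A" "inj_on v A" using insert.prems(1,2) by simp_all
    show "e ` A \<subseteq> {..<dim_row M}" "v ` A \<subseteq> {..<dim_col M}" using insert.prems(3,4) by auto
    show "M $$ (e l, v l) dvd 1" if "l \<in> A" for l using insert.prems(5) that by simp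
    show "M $$ (e l', v l) = 0" if "l \<in> A" "l' \<in> A" "l' < l" for l l'
      using insert.prems(6) that by simp
  qed
  moreover have "(-1 :: 'a) ^ k dvd 1" for k by (simp add: minus_one_power_iff)
  ultimately show ?case using insert.prems(5) by (simp add: unit_prod)
qed

section \<open>Spanning trees\<close>

definition edge_rel :: "(nat \<Rightarrow> 'v) \<Rightarrow> (nat \<Rightarrow> 'v) \<Rightarrow> nat \<Rightarrow> ('v \<times> 'v) set" where
  "edge_rel s t m = {(s i, t i) | i. i < m} \<union> {(t i, s i) | i. i < m}"

lemma sym_edge_rel: "sym (edge_rel s t m)"
  by (auto simp: edge_rel_def sym_def)

lemma edge_rel_rtrancl_crossing:
  assumes "(a, b) \<in> (edge_rel s t m)\<^sup>*" "a \<in> S" "b \<notin> S"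
  shows "\<exists>i<m. s i \<in> S \<and> t i \<notin> S \<or> t i \<in> S \<and> s i \<notin> S"
  using assms
proof (induction rule: rtrancl_induct)
  case (step y z)
  then show ?case by (cases "y \<in> S") (auto simp: edge_rel_def)
qed simp

text \<open>The vertices \<open>v 0, \<dots>, v k\<close> of a tree whose edge \<open>e l\<close> attaches \<open>v l\<close> to an earlier vertex.\<close>
definition tree_seq :: "(nat \<Rightarrow> 'v) \<Rightarrow> (nat \<Rightarrow> 'v) \<Rightarrow> nat \<Rightarrow> nat \<Rightarrow> (nat \<Rightarrow> 'v) \<Rightarrow> (nat \<Rightarrow> nat) \<Rightarrow> bool"
  where "tree_seq s t m k v e \<longleftrightarrow> inj_on v {..k} \<and>
    (\<forall>l\<in>{1..k}. e l < m \<and>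
       (s (e l) = v l \<and> t (e l) \<in> v ` {..<l} \<or> t (e l) = v l \<and> s (e l) \<in> v ` {..<l}))"

lemma tree_seq_Suc: "tree_seq s t m (Suc k) v e \<Longrightarrow> tree_seq s t m k v e"
  by (auto simp: tree_seq_def atMost_Suc)

lemma tree_seq_fresh:
  assumes "tree_seq s t m k v e" "l \<le> k" "l' < l"
  shows "v l \<notin> v ` {..l'}"
proof
  assume "v l \<in> v ` {..l'}"
  then obtain j where j: "j \<le> l'" "v l = v j" by auto
  then have "l = j" using assms inj_onD[of v "{..k}" l j] by (auto simp: tree_seq_def)
  then show False using j(1) assms(3) by simp
qed

lemma tree_seq_edge:
  assumes T: "tree_seq s t m k v e" and l: "l \<in> {1..k}"
  shows "e l < m" and "s (e l) \<in> v ` {..l}" and "t (e l) \<in> v ` {..l}"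
    and "s (e l) = v l \<longleftrightarrow> t (e l) \<noteq> v l"
proof -
  have "{..<l} = {..l - 1}" using l by auto
  then have fresh: "v l \<notin> v ` {..<l}" using tree_seq_fresh[OF T, of l "l - 1"] l by auto
  have earlier: "v ` {..<l} \<subseteq> v ` {..l}" by auto
  show "e l < m" using T l unfolding tree_seq_def by blast
  consider "s (e l) = v l" "t (e l) \<in> v ` {..<l}" | "t (e l) = v l" "s (e l) \<in> v ` {..<l}"
    using T l unfolding tree_seq_def by blast
  then show "s (e l) \<in> v ` {..l}" "t (e l) \<in> v ` {..l}" "s (e l) = v l \<longleftrightarrow> t (e l) \<noteq> v l"
    by (cases; use fresh earlier in force)+
qed

lemma tree_seq_inj_edges:
  assumes T: "tree_seq s t m k v e" shows "inj_on e {1..k}"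
proof -
  have no_repeat: False if l: "l \<in> {1..k}" and l': "l' \<in> {1..k}" "l' < l" and eq: "e l = e l'" for l l'
  proof -
    have "s (e l) = v l \<or> t (e l) = v l" using tree_seq_edge(4)[OF T l] by blast
    moreover have "s (e l) \<in> v ` {..l'}" "t (e l) \<in> v ` {..l'}"
      using tree_seq_edge(2,3)[OF T l'(1)] eq by simp_all
    moreover have "v l \<notin> v ` {..l'}" using tree_seq_fresh[OF T _ l'(2)] l by simp
    ultimately show False by auto
  qed
  show ?thesis
  proof (rule inj_onI)
    fix l l' assume "l \<in> {1..k}" "l' \<in> {1..k}" "e l = e l'"
    then show "l = l'" using no_repeat[of l l'] no_repeat[of l' l] by (cases l l' rule: linorder_cases) auto
  qed
qed

lemma tree_seq_image_Diff_root:
  assumes T: "tree_seq s t m k v e" shows "v ` {..k} - {v 0} = v ` {1..k}"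
proof -
  have "v 0 \<notin> v ` {1..k}" using tree_seq_fresh[OF T, of _ 0] by fastforce
  moreover have "{..k} = insert 0 {1..k}" by auto
  ultimately show ?thesis by auto
qed

lemma tree_seq_extend:
  assumes T: "tree_seq s t m k v e" and i: "i < m" and u: "u \<notin> v ` {..k}"
    and edge: "s i = u \<and> t i \<in> v ` {..k} \<or> t i = u \<and> s i \<in> v ` {..k}"
  shows "tree_seq s t m (Suc k) (v(Suc k := u)) (e(Suc k := i))"
proof -
  let ?v = "v(Suc k := u)" and ?e = "e(Suc k := i)"
  have img: "?v ` {..<l} = v ` {..<l}" if "l \<le> Suc k" for l
    using that by (intro image_cong) auto
  have "inj_on ?v {..k}"
    using T inj_on_cong[of "{..k}" ?v v] by (simp add: tree_seq_def)
  moreover have "?v (Suc k) \<notin> ?v ` {..k}"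
    using u img[of "Suc k"] by (simp add: lessThan_Suc_atMost)
  ultimately have inj: "inj_on ?v {..Suc k}"
    by (simp add: atMost_Suc)
  have "?e l < m \<and> (s (?e l) = ?v l \<and> t (?e l) \<in> ?v ` {..<l} \<or> t (?e l) = ?v l \<and> s (?e l) \<in> ?v ` {..<l})"
    if l: "l \<in> {1..Suc k}" for l
  proof (cases "l = Suc k")
    case True
    then show ?thesis using i edge img[of "Suc k"] by (simp add: lessThan_Suc_atMost)
  next
    case False
    then have "l \<in> {1..k}" using l by auto
    then show ?thesis using T img[of l] False unfolding tree_seq_def by simp
  qed
  with inj show ?thesis unfolding tree_seq_def by blast
qed

lemma spanning_tree_exists:
  assumes V: "finite V" "r \<in> V" and edges: "\<And>i. i < m \<Longrightarrow> s i \<in> V \<and> t i \<in> V"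
    and connected: "\<And>w. w \<in> V \<Longrightarrow> (r, w) \<in> (edge_rel s t m)\<^sup>*"
  obtains v e where "v 0 = r" "v ` {..card V - 1} = V" "tree_seq s t m (card V - 1) v e"
proof -
  have grow: "\<exists>v e. v 0 = r \<and> v ` {..k} \<subseteq> V \<and> tree_seq s t m k v e" if "k < card V" for k
    using that
  proof (induction k)
    case 0
    show ?case
      using V(2) by (intro exI[of _ "\<lambda>_. r"] exI[of _ "\<lambda>_. 0"]) (simp add: tree_seq_def)
  next
    case (Suc k)
    have "k < card V" using Suc.prems by simp
    then obtain v e where v: "v 0 = r" "v ` {..k} \<subseteq> V" and T: "tree_seq s t m k v e"
      using Suc.IH by blast
    have "card (v ` {..k}) = Suc k" using T by (simp add: tree_seq_def card_image)
    then have "v ` {..k} \<noteq> V" using Suc.prems by auto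
    then obtain w where w: "w \<in> V" "w \<notin> v ` {..k}" using v(2) by blast
    have "r \<in> v ` {..k}" using v(1) by force
    then obtain i where i: "i < m"
      and cross: "s i \<in> v ` {..k} \<and> t i \<notin> v ` {..k} \<or> t i \<in> v ` {..k} \<and> s i \<notin> v ` {..k}"
      using edge_rel_rtrancl_crossing[OF connected[OF w(1)] _ w(2)] by blast
    define u where "u = (if s i \<in> v ` {..k} then t i else s i)"
    have u: "u \<in> V" "u \<notin> v ` {..k}" using cross edges[OF i] unfolding u_def by auto
    have edge: "s i = u \<and> t i \<in> v ` {..k} \<or> t i = u \<and> s i \<in> v ` {..k}"
      using cross unfolding u_def by auto
    have "v(Suc k := u) ` {..Suc k} \<subseteq> V" using v(2) u(1) by (auto simp: atMost_Suc)
    moreover have "(v(Suc k := u)) 0 = r" using v(1) by simp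
    ultimately show ?case using tree_seq_extend[OF T i u(2) edge] by blast
  qed
  have pos: "0 < card V" using V card_gt_0_iff by blast
  then obtain v e where v: "v 0 = r" "v ` {..card V - 1} \<subseteq> V"
    and T: "tree_seq s t m (card V - 1) v e"
    using grow[of "card V - 1"] by auto
  have "card (v ` {..card V - 1}) = card V"
    using T pos by (simp add: tree_seq_def card_image)
  then have "v ` {..card V - 1} = V" by (rule card_subset_eq[OF V(1) v(2)])
  then show ?thesis using that v(1) T by blast
qed

section \<open>The Alexander matrix of a presented quandle\<close>

locale presented_quandle_cocycle =
  fixes n :: nat and rs :: "(nat fqterm \<times> nat fqterm) list"
    and X :: "'a set" and opX :: "'a \<Rightarrow> 'a \<Rightarrow> 'a"
    and \<theta> :: "'a \<Rightarrow> 'a \<Rightarrow> 'b::ab_group_add"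
    and \<rho> :: "nat fqterm set \<Rightarrow> 'a"
  assumes n_pos: "0 < n"
    and relators_wf: "\<forall>(s, t) \<in> set rs. wf_term n s \<and> wf_term n t"
    and connected: "quandle_connected (pres_car n (set rs)) (pres_op n (set rs))"
    and cocycle: "quandle_2cocycle X opX \<theta>"
    and hom: "quandle_hom (pres_car n (set rs)) (pres_op n (set rs)) X opX \<rho>"
begin

abbreviation "Q \<equiv> pres_car n (set rs)"
abbreviation "opQ \<equiv> pres_op n (set rs)"
abbreviation "cls \<equiv> pres_class n (set rs)"
abbreviation "m \<equiv> length rs"
abbreviation "weight \<equiv> term_weight (\<lambda>t. \<rho> (cls t)) \<theta>"
abbreviation "Mx \<equiv> alex_matrix n rs (\<lambda>t. \<rho> (cls t)) \<theta>"
abbreviation "cycle_values \<equiv>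
  {cocycle_lin (\<lambda>x y. \<theta> (\<rho> x) (\<rho> y)) z | z. z \<in> chains (Q \<times> Q) \<and> bd2 opQ z = 0}"

definition lhs :: "nat \<Rightarrow> nat fqterm" where "lhs i = fst (rs ! i)"
definition rhs :: "nat \<Rightarrow> nat fqterm" where "rhs i = snd (rs ! i)"
definition src :: "nat \<Rightarrow> nat" where "src i = base (lhs i)"
definition tgt :: "nat \<Rightarrow> nat" where "tgt i = base (rhs i)"

definition defect :: "(nat \<Rightarrow> 'b) \<Rightarrow> nat \<Rightarrow> 'b" where
  "defect p i = weight (lhs i) + p (src i) - weight (rhs i) - p (tgt i)"

lemma quandle_Q: "quandle Q opQ"
  using connected unfolding quandle_connected_def by blast

lemma rho_cls: "wf_term n t \<Longrightarrow> \<rho> (cls t) \<in> X"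
  using hom pres_class_in_car unfolding quandle_hom_def by blast

lemma rho_cls_Rop: "wf_term n s \<Longrightarrow> wf_term n t \<Longrightarrow> \<rho> (cls (Rop s t)) = opX (\<rho> (cls s)) (\<rho> (cls t))"
  using hom pres_class_in_car pres_op_class[of n s t] unfolding quandle_hom_def by metis

lemma relator:
  assumes "i < m"
  shows "wf_term n (lhs i)" "wf_term n (rhs i)" "(lhs i, rhs i) \<in> pcong n (set rs)"
    "src i < n" "tgt i < n"
proof -
  have mem: "(lhs i, rhs i) \<in> set rs" using assms unfolding lhs_def rhs_def by simp
  then show wf: "wf_term n (lhs i)" "wf_term n (rhs i)" using relators_wf by auto
  show "(lhs i, rhs i) \<in> pcong n (set rs)" using mem wf by (rule pcong.rel)
  show "src i < n" "tgt i < n" unfolding src_def tgt_def using wf wf_term_base by auto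
qed

lemma Mx_dims: "dim_row Mx = m" "dim_col Mx = n"
  by (simp_all add: alex_matrix_def)

lemma Mx_nth:
  assumes "i < m" "j < n"
  shows "Mx $$ (i, j) = (if src i = j then gr (weight (lhs i)) else 0)
                      - (if tgt i = j then gr (weight (rhs i)) else 0)"
  using assms by (simp add: alex_matrix_def fox_eq_term_weight src_def tgt_def lhs_def rhs_def)

lemma Mx_row_sum:
  assumes i: "i < m"
  shows "(\<Sum>j<n. Mx $$ (i, j) * gr (p j)) = gr (weight (rhs i) + p (tgt i)) * (gr (defect p i) - 1)"
proof -
  have "(\<Sum>j<n. Mx $$ (i, j) * gr (p j))
      = (\<Sum>j<n. (if src i = j then gr (weight (lhs i) + p j) else 0)
                - (if tgt i = j then gr (weight (rhs i) + p j) else 0))"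
    by (rule sum.cong) (simp_all add: Mx_nth[OF i] left_diff_distrib gr_add)
  also have "\<dots> = (\<Sum>j<n. if src i = j then gr (weight (lhs i) + p j) else 0)
                - (\<Sum>j<n. if tgt i = j then gr (weight (rhs i) + p j) else 0)"
    by (rule sum_subtractf)
  also have "\<dots> = gr (weight (lhs i) + p (src i)) - gr (weight (rhs i) + p (tgt i))"
    using relator(4,5)[OF i] by simp
  also have "\<dots> = gr (weight (rhs i) + p (tgt i)) * (gr (defect p i) - 1)"
    by (simp add: gr_add right_diff_distrib defect_def algebra_simps)
  finally show ?thesis .
qed

lemma maximal_minor_mult_gr:
  assumes I: "I \<subseteq> {..<m}" "card I = n"
  shows "det (submatrix Mx I {..<n}) * gr (p 0) =
    (\<Sum>r\<in>I. (-1) ^ card {a\<in>I. a < r} * det (submatrix Mx (I - {r}) ({..<n} - {0}))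
        * (gr (weight (rhs r) + p (tgt r)) * (gr (defect p r) - 1)))"
proof -
  have "det (submatrix Mx I {..<n}) * gr (p 0) =
    (\<Sum>r\<in>I. (-1) ^ (card {a\<in>I. a < r} + card {b\<in>{..<n}. b < 0})
        * det (submatrix Mx (I - {r}) ({..<n} - {0})) * (\<Sum>j\<in>{..<n}. Mx $$ (r, j) * gr (p j)))"
    by (rule det_submatrix_mult[where y = "\<lambda>j. gr (p j)"]) (use I n_pos in \<open>simp_all add: Mx_dims\<close>)
  also have "\<dots> = (\<Sum>r\<in>I. (-1) ^ card {a\<in>I. a < r} * det (submatrix Mx (I - {r}) ({..<n} - {0}))
        * (gr (weight (rhs r) + p (tgt r)) * (gr (defect p r) - 1)))"
  proof (rule sum.cong[OF HOL.refl])
    fix r assume "r \<in> I"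
    then have "r < m" using I(1) by auto
    then show "(-1) ^ (card {a\<in>I. a < r} + card {b\<in>{..<n}. b < 0})
        * det (submatrix Mx (I - {r}) ({..<n} - {0})) * (\<Sum>j\<in>{..<n}. Mx $$ (r, j) * gr (p j))
      = (-1) ^ card {a\<in>I. a < r} * det (submatrix Mx (I - {r}) ({..<n} - {0}))
        * (gr (weight (rhs r) + p (tgt r)) * (gr (defect p r) - 1))"
      by (simp add: Mx_row_sum)
  qed
  finally show ?thesis .
qed

lemma pcong_base:
  "(s, t) \<in> pcong n (set rs) \<Longrightarrow> (base s, base t) \<in> (edge_rel src tgt m)\<^sup>*"
proof (induction rule: pcong.induct)
  case (sym s t)
  show ?case by (rule symD[OF sym_rtrancl[OF sym_edge_rel] sym.IH])
next
  case (trans s t u)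
  then show ?case by (meson rtrancl_trans)
next
  case (rel s t)
  then obtain i where i: "i < m" "rs ! i = (s, t)" by (metis in_set_conv_nth)
  then have "(src i, tgt i) \<in> edge_rel src tgt m" unfolding edge_rel_def by blast
  then show ?case using i unfolding src_def tgt_def lhs_def rhs_def by auto
qed auto

text \<open>The classes all of whose representatives have base generator in the component of
  \<open>x\<^sub>0\<close> are closed under the moves generating connectivity of \<open>Q\<close>.\<close>
lemma relator_graph_connected:
  assumes "w < n" shows "(0, w) \<in> (edge_rel src tgt m)\<^sup>*"
proof -
  let ?E = "(edge_rel src tgt m)\<^sup>*"
  let ?moves = "{(a, opQ a z) | a z. a \<in> Q \<and> z \<in> Q} \<union> {(a, qinv Q opQ a z) | a z. a \<in> Q \<and> z \<in> Q}"
  define rooted where "rooted C \<longleftrightarrow> C \<in> Q \<and> (\<forall>t\<in>C. (0, base t) \<in> ?E)" for C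
  have rooted_cls: "rooted (cls t) \<longleftrightarrow> (0, base t) \<in> ?E" if t: "wf_term n t" for t
  proof
    assume "rooted (cls t)"
    moreover have "t \<in> cls t" using t by (simp add: pres_class_iff pcong.refl)
    ultimately show "(0, base t) \<in> ?E" unfolding rooted_def by blast
  next
    assume root: "(0, base t) \<in> ?E"
    have "(0, base u) \<in> ?E" if "u \<in> cls t" for u
      using rtrancl_trans[OF root pcong_base] that by (simp add: pres_class_iff)
    then show "rooted (cls t)" unfolding rooted_def using pres_class_in_car[OF t] by blast
  qed
  have bij: "bij_betw (\<lambda>u. opQ u z) Q Q" if "z \<in> Q" for z
    using quandle_Q that unfolding quandle_def by blast
  have "rooted y" if "(cls (Gen 0), y) \<in> ?moves\<^sup>*" for y
    using that
  proof (induction rule: rtrancl_induct)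
    case base
    then show ?case using rooted_cls[of "Gen 0"] n_pos by simp
  next
    case (step y y')
    then have "y \<in> Q" unfolding rooted_def by blast
    then obtain ty where ty: "wf_term n ty" "y = cls ty" by (rule pres_car_cases)
    from step.hyps(2) show ?case
    proof (elim UnE CollectE exE conjE)
      fix a z assume "(y, y') = (a, opQ a z)" "a \<in> Q" "z \<in> Q"
      then have y': "y' = opQ y z" and z: "z \<in> Q" by simp_all
      obtain tz where tz: "wf_term n tz" "z = cls tz" using z by (rule pres_car_cases)
      have "y' = cls (Rop ty tz)" using y' ty tz pres_op_class by simp
      moreover have "(0, base ty) \<in> ?E" using step.IH rooted_cls[OF ty(1)] ty(2) by simp
      ultimately show ?case using rooted_cls[of "Rop ty tz"] ty(1) tz(1) by simp
    next
      fix a z assume "(y, y') = (a, qinv Q opQ a z)" "a \<in> Q" "z \<in> Q"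
      then have y': "y' = inv_into Q (\<lambda>u. opQ u z) y" and z: "z \<in> Q" by (simp_all add: qinv_def)
      have b: "bij_betw (\<lambda>u. opQ u z) Q Q" by (rule bij[OF z])
      have y'Q: "y' \<in> Q" unfolding y' by (metis b bij_betw_def inv_into_into \<open>y \<in> Q\<close>)
      have "opQ y' z = y" unfolding y' by (metis b bij_betw_def f_inv_into_f \<open>y \<in> Q\<close>)
      obtain tz where tz: "wf_term n tz" "z = cls tz" using z by (rule pres_car_cases)
      obtain ty' where ty': "wf_term n ty'" "y' = cls ty'" using y'Q by (rule pres_car_cases)
      have "y = cls (Rop ty' tz)" using \<open>opQ y' z = y\<close> ty' tz pres_op_class by simp
      then have "(0, base ty') \<in> ?E"
        using step.IH rooted_cls[of "Rop ty' tz"] ty'(1) tz(1) by simp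
      then show ?case using rooted_cls[OF ty'(1)] ty'(2) by simp
    qed
  qed
  moreover have "(cls (Gen 0), cls (Gen w)) \<in> ?moves\<^sup>*"
  proof -
    have "cls (Gen 0) \<in> Q" "cls (Gen w) \<in> Q"
      using n_pos assms by (simp_all add: pres_class_in_car)
    then show ?thesis using connected unfolding quandle_connected_def by blast
  qed
  ultimately show ?thesis using rooted_cls[of "Gen w"] assms by simp
qed

lemma relator_spanning_tree:
  obtains v e where "v 0 = 0" "v ` {..n - 1} = {..<n}" "tree_seq src tgt m (n - 1) v e"
proof -
  obtain v e where "v 0 = 0" "v ` {..card {..<n} - 1} = {..<n}" "tree_seq src tgt m (card {..<n} - 1) v e"
  proof (rule spanning_tree_exists[of "{..<n}" 0 m src tgt])
    show "finite {..<n}" "0 \<in> {..<n}" using n_pos by simp_all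
    show "src i \<in> {..<n} \<and> tgt i \<in> {..<n}" if "i < m" for i using relator(4,5)[OF that] by simp
    show "(0, w) \<in> (edge_rel src tgt m)\<^sup>*" if "w \<in> {..<n}" for w
      using relator_graph_connected that by simp
  qed
  then show thesis using that by simp
qed

lemma defect_eq_0_iff: "defect p i = 0 \<longleftrightarrow> weight (lhs i) + p (src i) = weight (rhs i) + p (tgt i)"
  by (simp add: defect_def algebra_simps)

lemma attach_relator_chain:
  assumes i: "i < m" and sides: "ta = lhs i \<and> tu = rhs i \<or> ta = rhs i \<and> tu = lhs i"
    and P: "P \<in> chains (Q \<times> Q)" "bd2 opQ P = frag_of (cls (Gen 0)) - frag_of (cls (Gen (base ta)))"
  shows "P + term_chain cls ta - term_chain cls tu \<in> chains (Q \<times> Q)"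
    and "bd2 opQ (P + term_chain cls ta - term_chain cls tu)
         = frag_of (cls (Gen 0)) - frag_of (cls (Gen (base tu)))"
    and "cocycle_lin (\<lambda>x y. \<theta> (\<rho> x) (\<rho> y)) (P + term_chain cls ta - term_chain cls tu)
         = cocycle_lin (\<lambda>x y. \<theta> (\<rho> x) (\<rho> y)) P + weight ta - weight tu"
proof -
  have "cls (lhs i) = cls (rhs i)" by (rule pres_class_eq[OF relator(3)[OF i]])
  then have wf: "wf_term n ta" "wf_term n tu" and cls_eq: "cls ta = cls tu"
    using sides relator(1,2)[OF i] by auto
  show "P + term_chain cls ta - term_chain cls tu \<in> chains (Q \<times> Q)"
    using P(1) term_chain_in_chains[OF wf(1)] term_chain_in_chains[OF wf(2)]
    by (simp add: chains_add chains_diff)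
  show "bd2 opQ (P + term_chain cls ta - term_chain cls tu)
      = frag_of (cls (Gen 0)) - frag_of (cls (Gen (base tu)))"
    using P(2) by (simp add: bd2_add bd2_diff bd2_term_chain wf cls_eq)
  show "cocycle_lin (\<lambda>x y. \<theta> (\<rho> x) (\<rho> y)) (P + term_chain cls ta - term_chain cls tu)
      = cocycle_lin (\<lambda>x y. \<theta> (\<rho> x) (\<rho> y)) P + weight ta - weight tu"
    by (simp add: cocycle_lin_add cocycle_lin_diff cocycle_lin_term_chain)
qed

lemma tree_potential:
  assumes "tree_seq src tgt m k v e" "v 0 = 0" "v ` {..k} \<subseteq> {..<n}"
  shows "\<exists>P. (\<forall>x\<in>v ` {..k}. P x \<in> chains (Q \<times> Q)
                \<and> bd2 opQ (P x) = frag_of (cls (Gen 0)) - frag_of (cls (Gen x)))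
           \<and> (\<forall>l\<in>{1..k}. defect (\<lambda>x. cocycle_lin (\<lambda>x y. \<theta> (\<rho> x) (\<rho> y)) (P x)) (e l) = 0)"
  using assms
proof (induction k)
  case 0
  then show ?case by (intro exI[of _ "\<lambda>_. 0"]) auto
next
  case (Suc k)
  let ?val = "\<lambda>P x. cocycle_lin (\<lambda>x y. \<theta> (\<rho> x) (\<rho> y)) (P x)"
  let ?i = "e (Suc k)" and ?u = "v (Suc k)" and ?V = "v ` {..k}"
  have T: "tree_seq src tgt m k v e" by (rule tree_seq_Suc[OF Suc.prems(1)])
  have "v ` {..k} \<subseteq> {..<n}" using Suc.prems(3) image_mono[of "{..k}" "{..Suc k}" v] by auto
  then obtain P where P: "\<forall>x\<in>?V. P x \<in> chains (Q \<times> Q) \<and> bd2 opQ (P x) = frag_of (cls (Gen 0)) - frag_of (cls (Gen x))"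
    and D: "\<forall>l\<in>{1..k}. defect (?val P) (e l) = 0"
    using Suc.IH[OF T Suc.prems(2)] by blast
  have i: "?i < m" and u: "?u \<notin> ?V"
    using tree_seq_edge(1)[OF Suc.prems(1)] tree_seq_fresh[OF Suc.prems(1)] by auto
  have "\<forall>l\<in>{1..Suc k}. src (e l) = v l \<and> tgt (e l) \<in> v ` {..<l} \<or> tgt (e l) = v l \<and> src (e l) \<in> v ` {..<l}"
    using Suc.prems(1) unfolding tree_seq_def by blast
  then have "src ?i = ?u \<and> tgt ?i \<in> v ` {..<Suc k} \<or> tgt ?i = ?u \<and> src ?i \<in> v ` {..<Suc k}"
    using bspec[of _ _ "Suc k"] by simp
  then obtain ta tu where sides: "ta = lhs ?i \<and> tu = rhs ?i \<or> ta = rhs ?i \<and> tu = lhs ?i"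
    and a: "base ta \<in> ?V" and btu: "base tu = ?u"
    unfolding src_def tgt_def lessThan_Suc_atMost by blast
  have Pa: "P (base ta) \<in> chains (Q \<times> Q)"
    "bd2 opQ (P (base ta)) = frag_of (cls (Gen 0)) - frag_of (cls (Gen (base ta)))"
    using P a by blast+
  note new = attach_relator_chain[OF i sides Pa]
  define P' where "P' = P(?u := P (base ta) + term_chain cls ta - term_chain cls tu)"
  have old: "P' x = P x" if "x \<in> ?V" for x
    using that u unfolding P'_def by (cases "x = ?u") simp_all
  have "P' ?u \<in> chains (Q \<times> Q)"
    and "bd2 opQ (P' ?u) = frag_of (cls (Gen 0)) - frag_of (cls (Gen ?u))"
    using new(1,2) btu by (simp_all add: P'_def)
  then have chains: "\<forall>x\<in>v ` {..Suc k}. P' x \<in> chains (Q \<times> Q)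
      \<and> bd2 opQ (P' x) = frag_of (cls (Gen 0)) - frag_of (cls (Gen x))"
    using P old by (auto simp: atMost_Suc)
  have "defect (?val P') (e l) = 0" if l: "l \<in> {1..k}" for l
  proof -
    have "v ` {..l} \<subseteq> ?V" using l by auto
    then have "src (e l) \<in> ?V" "tgt (e l) \<in> ?V"
      using tree_seq_edge(2,3)[OF T l] unfolding src_def tgt_def by blast+
    then show ?thesis using D[rule_format, OF l] old by (simp add: defect_def)
  qed
  moreover have "defect (?val P') ?i = 0"
  proof -
    have "?val P' ?u = ?val P (base ta) + weight ta - weight tu"
      using new(3) by (simp add: P'_def)
    moreover have "?val P' (base ta) = ?val P (base ta)" using old a by simp
    ultimately show ?thesis
      using sides btu unfolding defect_eq_0_iff src_def tgt_def by (auto simp: algebra_simps)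
  qed
  ultimately have "\<forall>l\<in>{1..Suc k}. defect (?val P') (e l) = 0"
    by (auto simp: le_Suc_eq)
  with chains show ?case by blast
qed

lemma defect_in_cycle_values:
  assumes P: "\<forall>x<n. P x \<in> chains (Q \<times> Q) \<and> bd2 opQ (P x) = frag_of (cls (Gen 0)) - frag_of (cls (Gen x))"
    and i: "i < m"
  shows "defect (\<lambda>x. cocycle_lin (\<lambda>x y. \<theta> (\<rho> x) (\<rho> y)) (P x)) i \<in> cycle_values"
proof -
  have Ps: "P (src i) \<in> chains (Q \<times> Q)"
      "bd2 opQ (P (src i)) = frag_of (cls (Gen 0)) - frag_of (cls (Gen (base (lhs i))))"
    and Pt: "P (tgt i) \<in> chains (Q \<times> Q)"
      "bd2 opQ (P (tgt i)) = frag_of (cls (Gen 0)) - frag_of (cls (Gen (tgt i)))"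
    using P relator(4,5)[OF i] unfolding src_def by blast+
  have "lhs i = lhs i \<and> rhs i = rhs i \<or> lhs i = rhs i \<and> rhs i = lhs i" by simp
  note path = attach_relator_chain[OF i this Ps]
  define z where "z = P (src i) + term_chain cls (lhs i) - term_chain cls (rhs i) - P (tgt i)"
  have "z \<in> chains (Q \<times> Q)" unfolding z_def using path(1) Pt(1) by (rule chains_diff)
  moreover have "bd2 opQ z = 0"
  proof -
    have "bd2 opQ z = bd2 opQ (P (src i) + term_chain cls (lhs i) - term_chain cls (rhs i))
        - bd2 opQ (P (tgt i))"
      unfolding z_def by (rule bd2_diff)
    then show ?thesis using path(2) Pt(2) by (simp add: tgt_def)
  qed
  moreover have "cocycle_lin (\<lambda>x y. \<theta> (\<rho> x) (\<rho> y)) z = defect (\<lambda>x. cocycle_lin (\<lambda>x y. \<theta> (\<rho> x) (\<rho> y)) (P x)) i"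
  proof -
    have "cocycle_lin (\<lambda>x y. \<theta> (\<rho> x) (\<rho> y)) z
        = cocycle_lin (\<lambda>x y. \<theta> (\<rho> x) (\<rho> y)) (P (src i) + term_chain cls (lhs i) - term_chain cls (rhs i))
          - cocycle_lin (\<lambda>x y. \<theta> (\<rho> x) (\<rho> y)) (P (tgt i))"
      unfolding z_def by (rule cocycle_lin_diff)
    then show ?thesis unfolding path(3) defect_def by (simp add: algebra_simps)
  qed
  ultimately show ?thesis by (intro CollectI exI[of _ z]) simp
qed

lemma E0_subset_ideal:
  assumes D: "\<forall>i<m. defect p i \<in> cycle_values"
  shows "E0 Mx \<subseteq> ideal_gen {gr a - gr 0 | a. a \<in> cycle_values}"
proof -
  let ?J = "ideal_gen {gr a - gr 0 | a. a \<in> cycle_values}"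
  have J: "ring_module.subspace ?J" by (simp add: ideal_gen_eq_span)
  have "det (submatrix Mx I {..<n}) \<in> ?J" if I: "I \<subseteq> {..<m}" "card I = n" for I
  proof (rule ideal_unit_mult_cancel[OF J gr_unit[of "p 0"]])
    have "gr (defect p r) - 1 \<in> ?J" if "r \<in> I" for r
    proof -
      have "defect p r \<in> cycle_values" using D that I(1) by blast
      then have "gr (defect p r) - gr 0 \<in> {gr a - gr 0 | a. a \<in> cycle_values}" by blast
      then show ?thesis unfolding ideal_gen_eq_span by (simp add: ring_module.span_base)
    qed
    then have "det (submatrix Mx I {..<n}) * gr (p 0) \<in> ?J"
      unfolding maximal_minor_mult_gr[OF I]
      by (intro ring_module.subspace_sum[OF J] ring_module.subspace_scale[OF J]) simp
    then show "gr (p 0) * det (submatrix Mx I {..<n}) \<in> ?J" by (simp only: mult.commute)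
  qed
  then have "{det (submatrix Mx I {..<n}) | I. I \<subseteq> {..<m} \<and> card I = n} \<subseteq> ?J" by blast
  then show ?thesis
    unfolding E0_eq_span Mx_dims by (rule ring_module.span_minimal[OF _ J])
qed

text \<open>The potential \<open>p\<close> extends, modulo \<open>W\<close>, to a 1-cochain on \<open>Q\<close> whose coboundary is
  \<open>\<theta>\<rho>\<close>; hence \<open>\<theta>\<rho>\<close> vanishes on 2-cycles modulo \<open>W\<close>.\<close>
definition term_potential :: "(nat \<Rightarrow> 'b) \<Rightarrow> nat fqterm \<Rightarrow> 'b" where
  "term_potential p t = p (base t) + weight t"

lemma term_potential_pcong:
  assumes W: "add_subgroup W" and D: "\<forall>i<m. defect p i \<in> W"
    and st: "(s, t) \<in> pcong n (set rs)"
  shows "term_potential p s - term_potential p t \<in> W"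
  using st
proof (induction rule: pcong.induct)
  case (sym s t)
  then show ?case using add_subgroup_uminus[OF W] by fastforce
next
  case (trans s t u)
  then show ?case using add_subgroup_add[OF W trans.IH] by (simp add: algebra_simps)
next
  case (rel s t)
  then obtain i where "i < m" "rs ! i = (s, t)" by (metis in_set_conv_nth)
  then show ?case
    using D by (auto simp: term_potential_def defect_def lhs_def rhs_def src_def tgt_def algebra_simps)
next
  case (cong_op a b c d)
  then show ?case by (simp add: term_potential_def pres_class_eq)
next
  case (cong_inv a b c d)
  have "cls (Rinv a c) = cls (Rinv b d)" "cls c = cls d"
    using pres_class_eq[OF pcong.cong_inv[OF cong_inv.hyps]] pres_class_eq[OF cong_inv.hyps(2)] by simp_all
  then show ?case using cong_inv.IH(1) by (simp add: term_potential_def algebra_simps)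
next
  case (idem a)
  then show ?case
    using cocycle rho_cls[OF idem] add_subgroup_0[OF W]
    by (simp add: term_potential_def quandle_2cocycle_def)
next
  case (op_inv a b)
  then show ?case
    using pres_class_eq[OF pcong.op_inv[OF op_inv]] add_subgroup_0[OF W]
    by (simp add: term_potential_def)
next
  case (dist a b c)
  have "\<theta> (\<rho> (cls a)) (\<rho> (cls b)) + \<theta> (opX (\<rho> (cls a)) (\<rho> (cls b))) (\<rho> (cls c))
      = \<theta> (\<rho> (cls a)) (\<rho> (cls c)) + \<theta> (opX (\<rho> (cls a)) (\<rho> (cls c))) (opX (\<rho> (cls b)) (\<rho> (cls c)))"
    using cocycle rho_cls dist unfolding quandle_2cocycle_def by blast
  then show ?case
    using dist add_subgroup_0[OF W] by (simp add: term_potential_def rho_cls_Rop algebra_simps)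
qed (simp_all add: term_potential_def add_subgroup_0[OF W])

lemma cycle_values_subset:
  assumes W: "add_subgroup W" and D: "\<forall>i<m. defect p i \<in> W"
  shows "cycle_values \<subseteq> W"
proof
  define pot where "pot C = term_potential p (SOME t. t \<in> C)" for C
  have coboundary: "\<theta> (\<rho> x) (\<rho> y) + pot x - pot (opQ x y) \<in> W" if x: "x \<in> Q" and y: "y \<in> Q" for x y
  proof -
    obtain s where s: "wf_term n s" "x = cls s" using x by (rule pres_car_cases)
    obtain t where t: "wf_term n t" "y = cls t" using y by (rule pres_car_cases)
    note st = s t
    define s' t' where "s' = (SOME c. c \<in> x)" and "t' = (SOME c. c \<in> y)"
    have s't': "(s, s') \<in> pcong n (set rs)" "(t, t') \<in> pcong n (set rs)"
      unfolding s'_def t'_def st by (simp_all add: pcong_some_pres_class st)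
    then have wf: "wf_term n (Rop s' t')" and cls: "cls s' = x" "cls t' = y"
      using pcong_wf_term pres_class_eq st by auto
    have "term_potential p (Rop s' t') - pot (opQ x y) \<in> W"
      unfolding pot_def pres_op_def s'_def[symmetric] t'_def[symmetric]
      by (rule term_potential_pcong[OF W D pcong_some_pres_class[OF wf]])
    moreover have "term_potential p (Rop s' t') = pot x + \<theta> (\<rho> x) (\<rho> y)"
      using cls by (simp add: pot_def term_potential_def s'_def)
    ultimately show ?thesis by (simp add: algebra_simps)
  qed
  fix a assume "a \<in> cycle_values"
  then obtain z where z: "z \<in> chains (Q \<times> Q)" "bd2 opQ z = 0"
    and a: "a = cocycle_lin (\<lambda>x y. \<theta> (\<rho> x) (\<rho> y)) z" by blast
  have "Poly_Mapping.keys z \<subseteq> Q \<times> Q" using z(1) by (simp add: chains_iff)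
  then have "cocycle_lin (\<lambda>x y. \<theta> (\<rho> x) (\<rho> y)) z + lin_extend pot (bd2 opQ z) \<in> W"
  proof (induction z rule: frag_induction)
    case zero
    then show ?case using add_subgroup_0[OF W] by simp
  next
    case (one q)
    then obtain x y where "q = (x, y)" "x \<in> Q" "y \<in> Q" by auto
    then show ?case
      using coboundary[of x y] by (simp add: bd2_frag_of lin_extend_diff cocycle_lin_frag_of algebra_simps)
  next
    case (diff a b)
    then show ?case
      using add_subgroup_diff[OF W diff.IH]
      by (simp add: cocycle_lin_diff bd2_diff lin_extend_diff algebra_simps)
  qed
  then show "a \<in> W" using z(2) a by simp
qed

lemma tree_minor_unit:
  assumes T: "tree_seq src tgt m (n - 1) v e" and V: "v ` {..n - 1} = {..<n}"
  shows "det (submatrix Mx (e ` {1..n - 1}) (v ` {1..n - 1})) dvd 1"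
proof (rule det_submatrix_triangular_unit)
  show "inj_on e {1..n - 1}" using T by (rule tree_seq_inj_edges)
  have "inj_on v {..n - 1}" using T by (simp add: tree_seq_def)
  then show "inj_on v {1..n - 1}" by (rule inj_on_subset) auto
  show "e ` {1..n - 1} \<subseteq> {..<dim_row Mx}" using tree_seq_edge(1)[OF T] by (auto simp: Mx_dims)
  show "v ` {1..n - 1} \<subseteq> {..<dim_col Mx}" using V by (auto simp: Mx_dims)
  show "Mx $$ (e l, v l) dvd 1" if l: "l \<in> {1..n - 1}" for l
  proof -
    have "v l < n" using V l by auto
    then show ?thesis
      using tree_seq_edge(4)[OF T l] Mx_nth[OF tree_seq_edge(1)[OF T l]] gr_unit
      by (cases "src (e l) = v l") (simp_all add: src_def tgt_def)
  qed
  show "Mx $$ (e l', v l) = 0" if l: "l \<in> {1..n - 1}" and l': "l' \<in> {1..n - 1}" "l' < l" for l l'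
  proof -
    have "v l < n" using V l by auto
    moreover have "src (e l') \<noteq> v l" "tgt (e l') \<noteq> v l"
      using tree_seq_edge(2,3)[OF T l'(1)] tree_seq_fresh[OF T _ l'(2)] l by (auto simp: src_def tgt_def)
    ultimately show ?thesis using Mx_nth[OF tree_seq_edge(1)[OF T l'(1)]] by simp
  qed
qed simp

lemma maximal_minor_in_E0:
  assumes "I \<subseteq> {..<m}" "card I = n"
  shows "det (submatrix Mx I {..<n}) \<in> E0 Mx"
  using assms unfolding E0_eq_span Mx_dims by (blast intro: ring_module.span_base)

lemma unit_mult_defect_in_E0:
  assumes T: "tree_seq src tgt m (n - 1) v e" and v0: "v 0 = 0" and V: "v ` {..n - 1} = {..<n}"
    and D: "\<forall>l\<in>{1..n - 1}. defect p (e l) = 0" and i: "i < m" "i \<notin> e ` {1..n - 1}"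
  obtains u where "u dvd 1" "u * (gr (defect p i) - 1) \<in> E0 Mx"
proof -
  let ?T = "e ` {1..n - 1}"
  have "card ?T = n - 1" using tree_seq_inj_edges[OF T] by (simp add: card_image)
  then have I: "insert i ?T \<subseteq> {..<m}" "card (insert i ?T) = n"
    using i tree_seq_edge(1)[OF T] n_pos by auto
  have cols: "{..<n} - {0} = v ` {1..n - 1}" using tree_seq_image_Diff_root[OF T] V v0 by simp
  define u where "u = (-1) ^ card {a\<in>insert i ?T. a < i} * det (submatrix Mx ?T ({..<n} - {0}))
      * gr (weight (rhs i) + p (tgt i))"
  have unit: "u dvd 1"
    unfolding u_def cols by (intro unit_prod tree_minor_unit[OF T V] gr_unit) (simp add: minus_one_power_iff)
  let ?f = "\<lambda>r. (-1) ^ card {a\<in>insert i ?T. a < r} * det (submatrix Mx (insert i ?T - {r}) ({..<n} - {0}))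
      * (gr (weight (rhs r) + p (tgt r)) * (gr (defect p r) - 1))"
  have tree_rows: "sum ?f ?T = 0" using D by (intro sum.neutral) auto
  have "det (submatrix Mx (insert i ?T) {..<n}) * gr (p 0) = ?f i + sum ?f ?T"
    unfolding maximal_minor_mult_gr[OF I] by (rule sum.insert) (use i(2) in auto)
  also have "\<dots> = u * (gr (defect p i) - 1)"
    unfolding tree_rows u_def by (simp only: add_0_right Diff_insert_absorb[OF i(2)] mult.assoc)
  finally have minor: "det (submatrix Mx (insert i ?T) {..<n}) * gr (p 0) = u * (gr (defect p i) - 1)" .
  have J: "ring_module.subspace (E0 Mx)" by (simp add: E0_eq_span)
  have "det (submatrix Mx (insert i ?T) {..<n}) * gr (p 0) \<in> E0 Mx"
    by (subst mult.commute) (rule ring_module.subspace_scale[OF J maximal_minor_in_E0[OF I]])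
  then show ?thesis using that[OF unit] by (simp only: minor)
qed

lemma defect_in_E0:
  assumes T: "tree_seq src tgt m (n - 1) v e" and v0: "v 0 = 0" and V: "v ` {..n - 1} = {..<n}"
    and D: "\<forall>l\<in>{1..n - 1}. defect p (e l) = 0" and i: "i < m"
  shows "gr (defect p i) - 1 \<in> E0 Mx"
proof -
  have J: "ring_module.subspace (E0 Mx)" by (simp add: E0_eq_span)
  show ?thesis
  proof (cases "i \<in> e ` {1..n - 1}")
    case True
    then have "gr (defect p i) - 1 = 0" using D by auto
    then show ?thesis using ring_module.subspace_0[OF J] by simp
  next
    case False
    then obtain u where "u dvd 1" "u * (gr (defect p i) - 1) \<in> E0 Mx"
      by (rule unit_mult_defect_in_E0[OF T v0 V D i])
    then show ?thesis by (rule ideal_unit_mult_cancel[OF J])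
  qed
qed

lemma ideal_subset_E0:
  assumes "\<forall>i<m. gr (defect p i) - 1 \<in> E0 Mx"
  shows "ideal_gen {gr a - gr 0 | a. a \<in> cycle_values} \<subseteq> E0 Mx"
proof -
  have J: "ring_module.subspace (E0 Mx)" by (simp add: E0_eq_span)
  have "cycle_values \<subseteq> {a. gr a - 1 \<in> E0 Mx}"
    by (rule cycle_values_subset[OF add_subgroup_gr_ideal[OF J]]) (use assms in simp)
  then show ?thesis
    unfolding ideal_gen_eq_span by (intro ring_module.span_minimal[OF _ J]) auto
qed

lemma E0_alex_matrix: "E0 Mx = ideal_gen {gr a - gr 0 | a. a \<in> cycle_values}"
proof -
  obtain v e where v0: "v 0 = 0" and V: "v ` {..n - 1} = {..<n}"
    and T: "tree_seq src tgt m (n - 1) v e"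
    by (rule relator_spanning_tree)
  have "v ` {..n - 1} \<subseteq> {..<n}" using V by simp
  then obtain P
    where P0: "\<forall>x\<in>v ` {..n - 1}. P x \<in> chains (Q \<times> Q) \<and> bd2 opQ (P x) = frag_of (cls (Gen 0)) - frag_of (cls (Gen x))"
    and D: "\<forall>l\<in>{1..n - 1}. defect (\<lambda>x. cocycle_lin (\<lambda>x y. \<theta> (\<rho> x) (\<rho> y)) (P x)) (e l) = 0"
    using tree_potential[OF T v0] by blast
  have P: "\<forall>x<n. P x \<in> chains (Q \<times> Q) \<and> bd2 opQ (P x) = frag_of (cls (Gen 0)) - frag_of (cls (Gen x))"
    using P0 unfolding V by simp
  show ?thesis
  proof (rule equalityI)
    show "E0 Mx \<subseteq> ideal_gen {gr a - gr 0 | a. a \<in> cycle_values}"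
      using defect_in_cycle_values[OF P] by (intro E0_subset_ideal) blast
    show "ideal_gen {gr a - gr 0 | a. a \<in> cycle_values} \<subseteq> E0 Mx"
      using defect_in_E0[OF T v0 V D] by (intro ideal_subset_E0) blast
  qed
qed

end

theorem theorem5p1:
  fixes n :: nat
    and rs :: "(nat fqterm \<times> nat fqterm) list"
    and X :: "'a set" and opX :: "'a \<Rightarrow> 'a \<Rightarrow> 'a"
    and \<theta> :: "'a \<Rightarrow> 'a \<Rightarrow> 'b::ab_group_add"
    and \<rho> :: "nat fqterm set \<Rightarrow> 'a"
  assumes "0 < n"
    and "\<forall>(s, t) \<in> set rs. wf_term n s \<and> wf_term n t"
    and "quandle_connected (pres_car n (set rs)) (pres_op n (set rs))"
    and "quandle X opX"
    and "quandle_2cocycle X opX \<theta>"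
    and "quandle_hom (pres_car n (set rs)) (pres_op n (set rs)) X opX \<rho>"
  shows "E0 (alex_matrix n rs (\<lambda>t. \<rho> (pres_class n (set rs) t)) \<theta>) =
         ideal_gen {gr a - gr 0 | a. a \<in>
            (\<lambda>h. cocycle_H2 \<theta> (induced_H2 X opX \<rho> h)) ` H2Q (pres_car n (set rs)) (pres_op n (set rs))}"
proof -
  interpret presented_quandle_cocycle n rs X opX \<theta> \<rho>
    using assms(1-3,5,6) by unfold_locales
  show ?thesis
    unfolding image_cocycle_H2_induced[OF assms(6,5)] by (rule E0_alex_matrix)
qed

end
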